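(* Let $G=A_{k\ell}$ or $S_{k\ell}$, with $k,\ell\ge 2$ and $k\ell\ge 5$, act on the set of partitions of a $k\ell$-element set into $\ell$ parts of size $k$. Then $G$ is $\tfrac{3}{2}$-transitive if and only if $(k,\ell)=(3,2)$; in that case $G$ is in fact $2$-transitive.
   Context: A finite transitive permutation group $G$ on $\Omega$ is $\tfrac{3}{2}$-transitive if for $\alpha\in\Omega$ all orbits of $G_\alpha$ on $\Omega\setminus\{\alpha\}$ have the same size, greater than $1$. *)

theory Defs
  imports "HOL-Library.Disjoint_Sets" "HOL-Combinatorics.Permutations"
begin

definition transitive_on :: "'g set \<Rightarrow> 'x set \<Rightarrow> ('g \<Rightarrow> 'x \<Rightarrow> 'x) \<Rightarrow> bool" where
  "transitive_on G \<Omega> act \<longleftrightarrow> \<Omega> \<noteq> {} \<and> (\<forall>x\<in>\<Omega>. \<forall>y\<in>\<Omega>. \<exists>g\<in>G. act g x = y)"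

definition stab_orbit :: "'g set \<Rightarrow> ('g \<Rightarrow> 'x \<Rightarrow> 'x) \<Rightarrow> 'x \<Rightarrow> 'x \<Rightarrow> 'x set" where
  "stab_orbit G act \<alpha> \<beta> = {act g \<beta> | g. g \<in> G \<and> act g \<alpha> = \<alpha>}"

definition three_halves_transitive :: "'g set \<Rightarrow> 'x set \<Rightarrow> ('g \<Rightarrow> 'x \<Rightarrow> 'x) \<Rightarrow> bool" where
  "three_halves_transitive G \<Omega> act \<longleftrightarrow> transitive_on G \<Omega> act \<and>
     (\<forall>\<alpha>\<in>\<Omega>. \<exists>m::nat. m > 1 \<and> (\<forall>\<beta>\<in>\<Omega> - {\<alpha>}. card (stab_orbit G act \<alpha> \<beta>) = m))"

definition two_transitive :: "'g set \<Rightarrow> 'x set \<Rightarrow> ('g \<Rightarrow> 'x \<Rightarrow> 'x) \<Rightarrow> bool" where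
  "two_transitive G \<Omega> act \<longleftrightarrow> transitive_on G \<Omega> act \<and>
     (\<forall>\<alpha>\<in>\<Omega>. \<forall>\<beta>\<in>\<Omega>. \<forall>\<gamma>\<in>\<Omega>. \<forall>\<delta>\<in>\<Omega>. \<alpha> \<noteq> \<beta> \<longrightarrow> \<gamma> \<noteq> \<delta> \<longrightarrow>
        (\<exists>g\<in>G. act g \<alpha> = \<gamma> \<and> act g \<beta> = \<delta>))"

definition Sym :: "nat \<Rightarrow> (nat \<Rightarrow> nat) set" where
  "Sym n = {p. p permutes {0..<n}}"

definition Alt :: "nat \<Rightarrow> (nat \<Rightarrow> nat) set" where
  "Alt n = {p. p permutes {0..<n} \<and> evenperm p}"

definition uniform_partitions :: "nat \<Rightarrow> nat \<Rightarrow> nat set set set" where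
  "uniform_partitions k l = {P. partition_on {0..<k*l} P \<and> card P = l \<and> (\<forall>B\<in>P. card B = k)}"

definition part_act :: "(nat \<Rightarrow> nat) \<Rightarrow> nat set set \<Rightarrow> nat set set" where
  "part_act g P = (\<lambda>B. g ` B) ` P"

end

theory Submission
  imports Defs
begin

text \<open>
  Take the partition \<open>\<alpha>\<close> into blocks of consecutive numbers as base point; its stabiliser is the
  wreath product \<open>S\<^sub>k \<wr> S\<^sub>l\<close>, and \<open>3/2\<close>-transitivity says that all its orbits on the other
  partitions have one size. Swapping a single point between two blocks of \<open>\<alpha>\<close> gives a suborbit of
  size at most \<open>(l choose 2) k\<^sup>2\<close>, or \<open>2 (l choose 2)\<close> for \<open>k = 2\<close>, since its members are determined by
  two blocks and one point in each. Swapping two points between two blocks (\<open>k \<ge> 4\<close>) or cycling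
  three points through three blocks (\<open>l \<ge> 3\<close>) gives a strictly larger suborbit, and this holds
  for \<open>A\<^sub>k\<^sub>l\<close> as well, because each of these partitions is fixed together with \<open>\<alpha>\<close> by an odd
  permutation. For \<open>k = 3, l = 2\<close> the other nine partitions are exactly the single swaps, on which
  the stabiliser of \<open>\<alpha>\<close> is transitive, so the action is \<open>2\<close>-transitive.
\<close>

hide_const (open) List.transpose

lemma less_mult_iff_div_less: "0 < k \<Longrightarrow> (x::nat) < k * l \<longleftrightarrow> x div k < l"
  by (metis div_less_iff_less_mult mult.commute)

lemma block_pos_less: "c < l \<Longrightarrow> u < k \<Longrightarrow> c * k + u < k * (l::nat)"
proof -
  assume "c < l" "u < k"
  then have "c * k + u < (c + 1) * k" "(c + 1) * k \<le> l * k" by (simp, intro mult_right_mono) auto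
  then show ?thesis by (simp add: mult.commute)
qed

lemma block_pos_eq_iff: "u < k \<Longrightarrow> v < k \<Longrightarrow> c * k + u = d * k + (v::nat) \<longleftrightarrow> c = d \<and> u = v"
proof
  assume uv: "u < k" "v < k" and e: "c * k + u = d * k + v"
  have "(c * k + u) div k = c" "(d * k + v) div k = d" "(c * k + u) mod k = u" "(d * k + v) mod k = v"
    using uv by auto
  then show "c = d \<and> u = v" using e by metis
qed auto

lemma part_act_comp: "part_act (g \<circ> h) P = part_act g (part_act h P)"
  unfolding part_act_def by (simp add: image_comp)

lemma part_act_id: "part_act id P = P"
  unfolding part_act_def by simp

lemma part_act_inv:
  assumes "g permutes S"
  shows "part_act (inv g) (part_act g P) = P" "part_act g (part_act (inv g) P) = P"
  using permutes_inv_o[OF assms] by (simp_all add: part_act_comp[symmetric] part_act_id)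

lemma part_act_uniform_partitions:
  assumes t: "t permutes {0..<k*l}" and P: "P \<in> uniform_partitions k l"
  shows "part_act t P \<in> uniform_partitions k l"
proof -
  have inj: "inj t" using t permutes_inj by blast
  have P': "partition_on {0..<k*l} P" using P by (simp add: uniform_partitions_def)
  have "partition_on (t ` {0..<k*l}) ((`) t ` P - {{}})"
    by (rule partition_on_inj_image[OF P' inj_on_subset[OF inj]]) simp
  moreover have "(`) t ` P - {{}} = part_act t P"
    unfolding part_act_def using partition_onD3[OF P'] by fastforce
  moreover have "card (part_act t P) = card P" "\<forall>B\<in>part_act t P. card B = k"
    using P inj inj_image_eq_iff[OF inj]
    by (auto simp: part_act_def uniform_partitions_def card_image inj_on_def inj_on_subset)
  ultimately show ?thesis using P permutes_image[OF t] unfolding uniform_partitions_def by auto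
qed

lemma finite_uniform_partitions: "finite (uniform_partitions k l)"
  by (rule finite_subset[OF _ finitely_many_partition_on[of "{0..<k*l}"]])
    (auto simp: uniform_partitions_def)

lemma transpose_permutes: "a < n \<Longrightarrow> b < n \<Longrightarrow> transpose a b permutes {0..<(n::nat)}"
  by (rule permutes_swap_id) auto

lemma inv_transpose_comp: "inv (transpose a b \<circ> transpose c d) = transpose c d \<circ> transpose a b"
  by (simp add: o_inv_distrib)

lemma transpose_comp_commute:
  "a \<noteq> c \<Longrightarrow> a \<noteq> d \<Longrightarrow> b \<noteq> c \<Longrightarrow> b \<noteq> d \<Longrightarrow> transpose a b \<circ> transpose c d = transpose c d \<circ> transpose a b"
  by (auto simp: fun_eq_iff transpose_def)

lemma conj_transpose:
  assumes "bij g"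
  shows "g \<circ> transpose a b \<circ> inv g = transpose (g a) (g b)"
proof -
  have "transpose (g a) (g b) \<circ> g = g \<circ> transpose a b"
    using transpose_comp_eq[OF assms, of "g a" "g b"] assms by (simp add: bij_is_inj)
  then show ?thesis
    using bij_is_surj[OF assms] by (metis comp_assoc comp_id surj_iff)
qed

lemma conj_transpose_comp:
  assumes "bij g"
  shows "g \<circ> (transpose a b \<circ> transpose c d) \<circ> inv g = transpose (g a) (g b) \<circ> transpose (g c) (g d)"
proof -
  have "g \<circ> (transpose a b \<circ> transpose c d) \<circ> inv g
      = (g \<circ> transpose a b \<circ> inv g) \<circ> (g \<circ> transpose c d \<circ> inv g)"
    using bij_is_inj[OF assms] by (simp add: comp_assoc fun_eq_iff)
  then show ?thesis by (simp add: conj_transpose[OF assms])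
qed

lemma part_act_conj:
  assumes "g permutes S" "part_act g A = A"
  shows "part_act g (part_act h A) = part_act (g \<circ> h \<circ> inv g) A"
  using assms part_act_inv(1)[OF assms(1), of A] by (simp add: part_act_comp)

lemma part_act_stabiliser_transpose:
  assumes "g permutes S" "part_act g A = A"
  shows "part_act g (part_act (transpose a b) A) = part_act (transpose (g a) (g b)) A"
    and "part_act g (part_act (transpose a b \<circ> transpose c d) A)
      = part_act (transpose (g a) (g b) \<circ> transpose (g c) (g d)) A"
  using part_act_conj[OF assms] conj_transpose[OF permutes_bij[OF assms(1)]]
    conj_transpose_comp[OF permutes_bij[OF assms(1)]]
  by simp_all

lemma part_act_commuting:
  assumes "\<tau> \<circ> h = h \<circ> \<tau>" "part_act \<tau> A = A"
  shows "part_act \<tau> (part_act h A) = part_act h A"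
  using assms by (metis part_act_comp)

lemma permutes_less_iff: "t permutes {0..<(n::nat)} \<Longrightarrow> t x < n \<longleftrightarrow> x < n"
  using permutes_in_image[of t "{0..<n}" x] by simp

lemma alt_sym_permutes: "G = Alt n \<or> G = Sym n \<Longrightarrow> g \<in> G \<Longrightarrow> g permutes {0..<n}"
  unfolding Alt_def Sym_def by auto

lemma alt_sym_id: "G = Alt n \<or> G = Sym n \<Longrightarrow> id \<in> G"
  unfolding Alt_def Sym_def by (auto intro: permutes_id)

lemma alt_sym_inv:
  assumes G: "G = Alt n \<or> G = Sym n" and g: "g \<in> G"
  shows "inv g \<in> G"
proof -
  have p: "g permutes {0..<n}" using alt_sym_permutes[OF G g] .
  then have "evenperm (inv g) = evenperm g" using evenperm_inv permutes_imp_permutation by blast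
  then show ?thesis using G g permutes_inv[OF p] unfolding Alt_def Sym_def by auto
qed

lemma alt_sym_comp:
  assumes G: "G = Alt n \<or> G = Sym n" and g: "g \<in> G" and h: "h \<in> G"
  shows "g \<circ> h \<in> G"
proof -
  have p: "g permutes {0..<n}" "h permutes {0..<n}" using alt_sym_permutes[OF G] g h by auto
  then have "evenperm (g \<circ> h) = (evenperm g = evenperm h)"
    using evenperm_comp permutes_imp_permutation by blast
  then show ?thesis using G g h permutes_compose[OF p(2,1)] unfolding Alt_def Sym_def by auto
qed

lemma stab_orbit_alt_symE:
  assumes "G = Alt n \<or> G = Sym n" and "P \<in> stab_orbit G part_act \<alpha> \<beta>"
  obtains g where "g permutes {0..<n}" "part_act g \<alpha> = \<alpha>" "P = part_act g \<beta>"
  using assms alt_sym_permutes unfolding stab_orbit_def by blast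

text \<open>An odd permutation fixing both \<open>\<alpha>\<close> and \<open>\<beta>\<close> makes the suborbit of \<open>\<beta>\<close> under \<open>A\<^sub>n\<close>
  as large as under \<open>S\<^sub>n\<close>.\<close>

lemma part_act_in_stab_orbit:
  assumes G: "G = Alt n \<or> G = Sym n"
    and g: "g permutes {0..<n}" "part_act g \<alpha> = \<alpha>"
    and \<tau>: "\<tau> permutes {0..<n}" "\<not> evenperm \<tau>" "part_act \<tau> \<alpha> = \<alpha>" "part_act \<tau> \<beta> = \<beta>"
  shows "part_act g \<beta> \<in> stab_orbit G part_act \<alpha> \<beta>"
proof (cases "G = Sym n \<or> evenperm g")
  case True
  then have "g \<in> G" using G g unfolding Alt_def Sym_def by auto
  then show ?thesis using g unfolding stab_orbit_def by blast
next
  case False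
  have "evenperm (g \<circ> \<tau>)"
    using evenperm_comp[OF permutes_imp_permutation permutes_imp_permutation] g \<tau> False by fastforce
  then have "g \<circ> \<tau> \<in> G" using G False permutes_compose[OF \<tau>(1) g(1)] unfolding Alt_def Sym_def by auto
  moreover have "part_act (g \<circ> \<tau>) \<alpha> = \<alpha>" "part_act (g \<circ> \<tau>) \<beta> = part_act g \<beta>"
    using g \<tau> by (simp_all add: part_act_comp)
  ultimately show ?thesis unfolding stab_orbit_def by (metis (mono_tags, lifting) mem_Collect_eq)
qed

lemma stab_orbit_subset_uniform_partitions:
  assumes "G = Alt (k*l) \<or> G = Sym (k*l)" and "\<beta> \<in> uniform_partitions k l"
  shows "stab_orbit G part_act \<alpha> \<beta> \<subseteq> uniform_partitions k l"
  using assms part_act_uniform_partitions alt_sym_permutes unfolding stab_orbit_def by blast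

lemma finite_stab_orbit:
  assumes "G = Alt (k*l) \<or> G = Sym (k*l)" and "\<beta> \<in> uniform_partitions k l"
  shows "finite (stab_orbit G part_act \<alpha> \<beta>)"
  using finite_subset[OF stab_orbit_subset_uniform_partitions[OF assms] finite_uniform_partitions] .

subsection \<open>Two-transitivity from a transitive point stabiliser\<close>

lemma transitive_on_if_transitive_from:
  assumes G: "G = Alt n \<or> G = Sym n"
    and \<alpha>\<^sub>0: "\<alpha>\<^sub>0 \<in> \<Omega>" and transitive: "\<And>P. P \<in> \<Omega> \<Longrightarrow> \<exists>g\<in>G. part_act g \<alpha>\<^sub>0 = P"
  shows "transitive_on G \<Omega> part_act"
  unfolding transitive_on_def
proof (intro conjI ballI)
  show "\<Omega> \<noteq> {}" using \<alpha>\<^sub>0 by auto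
  fix P Q assume "P \<in> \<Omega>" "Q \<in> \<Omega>"
  then obtain g h where g: "g \<in> G" "part_act g \<alpha>\<^sub>0 = P" and h: "h \<in> G" "part_act h \<alpha>\<^sub>0 = Q"
    using transitive by blast
  have "h \<circ> inv g \<in> G" using alt_sym_comp[OF G h(1) alt_sym_inv[OF G g(1)]] .
  moreover have "part_act (inv g) P = \<alpha>\<^sub>0"
    using part_act_inv(1)[OF alt_sym_permutes[OF G g(1)], of \<alpha>\<^sub>0] g(2) by simp
  then have "part_act (h \<circ> inv g) P = Q" using h(2) by (simp add: part_act_comp)
  ultimately show "\<exists>g\<in>G. part_act g P = Q" by blast
qed

context
  fixes G :: "(nat \<Rightarrow> nat) set" and n :: nat and \<Omega> :: "nat set set set" and \<alpha>\<^sub>0 \<beta>\<^sub>0 :: "nat set set"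
  assumes G: "G = Alt n \<or> G = Sym n"
    and invariant: "\<And>g P. g \<in> G \<Longrightarrow> P \<in> \<Omega> \<Longrightarrow> part_act g P \<in> \<Omega>"
    and transitive: "\<And>P. P \<in> \<Omega> \<Longrightarrow> \<exists>g\<in>G. part_act g \<alpha>\<^sub>0 = P"
    and stab_transitive:
      "\<And>P. P \<in> \<Omega> \<Longrightarrow> P \<noteq> \<alpha>\<^sub>0 \<Longrightarrow> \<exists>u\<in>G. part_act u \<alpha>\<^sub>0 = \<alpha>\<^sub>0 \<and> part_act u \<beta>\<^sub>0 = P"
begin

private lemma pair_from_base_pair:
  assumes "P \<in> \<Omega>" "R \<in> \<Omega>" "P \<noteq> R"
  obtains g where "g \<in> G" "part_act g \<alpha>\<^sub>0 = P" "part_act g \<beta>\<^sub>0 = R"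
proof -
  obtain g where g: "g \<in> G" "part_act g \<alpha>\<^sub>0 = P" using transitive assms(1) by blast
  note inv_right = part_act_inv(2)[OF alt_sym_permutes[OF G g(1)]]
  have "part_act (inv g) R \<in> \<Omega>" using invariant alt_sym_inv[OF G g(1)] assms(2) .
  moreover have "part_act (inv g) R \<noteq> \<alpha>\<^sub>0" using inv_right[of R] g(2) assms(3) by auto
  ultimately obtain u where u: "u \<in> G" "part_act u \<alpha>\<^sub>0 = \<alpha>\<^sub>0" "part_act u \<beta>\<^sub>0 = part_act (inv g) R"
    using stab_transitive by blast
  then have "g \<circ> u \<in> G" "part_act (g \<circ> u) \<alpha>\<^sub>0 = P" "part_act (g \<circ> u) \<beta>\<^sub>0 = R"
    using alt_sym_comp[OF G g(1)] g(2) inv_right by (simp_all add: part_act_comp)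
  then show ?thesis using that by blast
qed

lemma two_transitive_if_stabiliser_transitive:
  assumes \<alpha>\<^sub>0: "\<alpha>\<^sub>0 \<in> \<Omega>"
  shows "two_transitive G \<Omega> part_act"
proof -
  have "\<exists>g\<in>G. part_act g \<alpha> = \<gamma> \<and> part_act g \<beta> = \<delta>"
    if pts: "\<alpha> \<in> \<Omega>" "\<beta> \<in> \<Omega>" "\<gamma> \<in> \<Omega>" "\<delta> \<in> \<Omega>" "\<alpha> \<noteq> \<beta>" "\<gamma> \<noteq> \<delta>"
    for \<alpha> \<beta> \<gamma> \<delta>
  proof -
    obtain g where g: "g \<in> G" "part_act g \<alpha>\<^sub>0 = \<alpha>" "part_act g \<beta>\<^sub>0 = \<beta>"
      using pair_from_base_pair[OF pts(1,2,5)] .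
    obtain h where h: "h \<in> G" "part_act h \<alpha>\<^sub>0 = \<gamma>" "part_act h \<beta>\<^sub>0 = \<delta>"
      using pair_from_base_pair[OF pts(3,4,6)] .
    note inv_left = part_act_inv(1)[OF alt_sym_permutes[OF G g(1)]]
    have "h \<circ> inv g \<in> G" using alt_sym_comp[OF G h(1) alt_sym_inv[OF G g(1)]] .
    moreover have "part_act (h \<circ> inv g) \<alpha> = \<gamma>" "part_act (h \<circ> inv g) \<beta> = \<delta>"
      using inv_left[of \<alpha>\<^sub>0] inv_left[of \<beta>\<^sub>0] g h by (simp_all add: part_act_comp)
    ultimately show ?thesis by blast
  qed
  then show ?thesis
    using transitive_on_if_transitive_from[OF G \<alpha>\<^sub>0 transitive] unfolding two_transitive_def by blast
qed

end

lemma stab_orbit_eq_if_two_transitive: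
  assumes G: "G = Alt n \<or> G = Sym n"
    and invariant: "\<And>g P. g \<in> G \<Longrightarrow> P \<in> \<Omega> \<Longrightarrow> part_act g P \<in> \<Omega>"
    and two: "two_transitive G \<Omega> part_act" and \<alpha>\<beta>: "\<alpha> \<in> \<Omega>" "\<beta> \<in> \<Omega> - {\<alpha>}"
  shows "stab_orbit G part_act \<alpha> \<beta> = \<Omega> - {\<alpha>}"
proof
  show "stab_orbit G part_act \<alpha> \<beta> \<subseteq> \<Omega> - {\<alpha>}"
  proof
    fix P assume "P \<in> stab_orbit G part_act \<alpha> \<beta>"
    then obtain g where g: "g \<in> G" "part_act g \<alpha> = \<alpha>" "P = part_act g \<beta>"
      unfolding stab_orbit_def by blast
    have "P \<noteq> \<alpha>"
    proof
      assume "P = \<alpha>"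
      then have "part_act (inv g) (part_act g \<beta>) = part_act (inv g) (part_act g \<alpha>)" using g by simp
      then show False using \<alpha>\<beta> part_act_inv(1)[OF alt_sym_permutes[OF G g(1)]] by simp
    qed
    then show "P \<in> \<Omega> - {\<alpha>}" using invariant g \<alpha>\<beta> by blast
  qed
  show "\<Omega> - {\<alpha>} \<subseteq> stab_orbit G part_act \<alpha> \<beta>"
  proof
    fix P assume P: "P \<in> \<Omega> - {\<alpha>}"
    have "\<forall>a\<in>\<Omega>. \<forall>b\<in>\<Omega>. \<forall>c\<in>\<Omega>. \<forall>d\<in>\<Omega>. a \<noteq> b \<longrightarrow> c \<noteq> d \<longrightarrow>
        (\<exists>g\<in>G. part_act g a = c \<and> part_act g b = d)"
      using two unfolding two_transitive_def by (rule conjunct2)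
    then have "\<exists>g\<in>G. part_act g \<alpha> = \<alpha> \<and> part_act g \<beta> = P"
      using \<alpha>\<beta> P by (metis DiffE singletonI)
    then show "P \<in> stab_orbit G part_act \<alpha> \<beta>" unfolding stab_orbit_def by blast
  qed
qed

lemma three_halves_transitive_if_two_transitive:
  assumes G: "G = Alt n \<or> G = Sym n"
    and invariant: "\<And>g P. g \<in> G \<Longrightarrow> P \<in> \<Omega> \<Longrightarrow> part_act g P \<in> \<Omega>"
    and \<Omega>: "finite \<Omega>" "3 \<le> card \<Omega>" and two: "two_transitive G \<Omega> part_act"
  shows "three_halves_transitive G \<Omega> part_act"
  unfolding three_halves_transitive_def
proof (intro conjI ballI)
  show "transitive_on G \<Omega> part_act" using two unfolding two_transitive_def by simp
  fix \<alpha> assume \<alpha>: "\<alpha> \<in> \<Omega>"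
  have "card (\<Omega> - {\<alpha>}) > 1" using \<alpha> \<Omega> by simp
  then show "\<exists>m>1. \<forall>\<beta>\<in>\<Omega> - {\<alpha>}. card (stab_orbit G part_act \<alpha> \<beta>) = m"
    using stab_orbit_eq_if_two_transitive[OF G invariant two \<alpha>] by auto
qed

definition block :: "nat \<Rightarrow> nat \<Rightarrow> nat set" where
  "block k c = {c*k..<c*k+k}"

definition block_partition :: "nat \<Rightarrow> nat \<Rightarrow> nat set set" where
  "block_partition k l = block k ` {0..<l}"

lemma mem_block_iff:
  assumes "0 < k"
  shows "x \<in> block k c \<longleftrightarrow> x div k = c"
proof -
  have "x div k = c \<longleftrightarrow> c \<le> x div k \<and> x div k < c + 1" by auto
  also have "\<dots> \<longleftrightarrow> c * k \<le> x \<and> x < (c + 1) * k"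
    using less_eq_div_iff_mult_less_eq[OF assms] div_less_iff_less_mult[OF assms] by simp
  finally show ?thesis unfolding block_def by (simp add: add.commute)
qed

lemma block_partition_in_uniform_partitions:
  assumes k: "0 < k"
  shows "block_partition k l \<in> uniform_partitions k l"
proof -
  have "\<Union>(block_partition k l) = {0..<k*l}"
  proof
    show "\<Union>(block_partition k l) \<subseteq> {0..<k*l}"
      using k by (auto simp: block_partition_def mem_block_iff less_mult_iff_div_less)
    show "{0..<k*l} \<subseteq> \<Union>(block_partition k l)"
    proof
      fix x assume "x \<in> {0..<k*l}"
      then have "x \<in> block k (x div k)" "x div k < l"
        using k by (auto simp: mem_block_iff less_mult_iff_div_less)
      then show "x \<in> \<Union>(block_partition k l)" unfolding block_partition_def by auto
    qed
  qed
  moreover have "disjoint (block_partition k l)"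
    unfolding disjoint_def block_partition_def using k by (auto simp: mem_block_iff)
  moreover have first: "c * k \<in> block k c" for c using k by (simp add: mem_block_iff)
  then have "{} \<notin> block_partition k l" unfolding block_partition_def by blast
  moreover have "inj_on (block k) {0..<l}"
    by (rule inj_onI) (metis first k mem_block_iff)
  then have "card (block_partition k l) = l" unfolding block_partition_def by (simp add: card_image)
  moreover have "\<forall>B\<in>block_partition k l. card B = k" unfolding block_partition_def block_def by auto
  ultimately show ?thesis unfolding uniform_partitions_def partition_on_def by auto
qed

lemma image_block:
  assumes k: "0 < k" and t: "t permutes {0..<k*l}" and c: "c < l"
  shows "t ` block k c = {y. y < k*l \<and> inv t y div k = c}"
proof -
  have "y \<in> t ` block k c \<longleftrightarrow> inv t y \<in> block k c" for y
    by (metis image_iff permutes_inverses[OF t])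
  moreover have "inv t y \<in> block k c \<longleftrightarrow> y < k*l \<and> inv t y div k = c" for y
    using k c permutes_less_iff[OF permutes_inv[OF t], of y]
    by (auto simp: mem_block_iff less_mult_iff_div_less)
  ultimately show ?thesis by auto
qed

lemma mem_part_act_block_partition:
  assumes "0 < k" "t permutes {0..<k*l}"
  shows "B \<in> part_act t (block_partition k l) \<longleftrightarrow> (\<exists>c<l. B = {y. y < k*l \<and> inv t y div k = c})"
proof
  assume "B \<in> part_act t (block_partition k l)"
  then show "\<exists>c<l. B = {y. y < k*l \<and> inv t y div k = c}"
    unfolding part_act_def block_partition_def using image_block[OF assms] by auto
next
  assume "\<exists>c<l. B = {y. y < k*l \<and> inv t y div k = c}"
  then obtain c where "c < l" "B = t ` block k c" using image_block[OF assms] by auto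
  then show "B \<in> part_act t (block_partition k l)" unfolding part_act_def block_partition_def by auto
qed

lemma part_in_part_act_block_partition:
  assumes k: "0 < k" and s: "s permutes {0..<k*l}" and x: "x < k*l"
  shows "{y. y < k*l \<and> inv s y div k = inv s x div k} \<in> part_act s (block_partition k l)"
proof -
  have "inv s x div k < l"
    using x k permutes_less_iff[OF permutes_inv[OF s]] less_mult_iff_div_less by blast
  then show ?thesis using mem_part_act_block_partition[OF k s] by blast
qed

lemma part_act_block_partition_subset:
  assumes k: "0 < k" and s: "s permutes {0..<k*l}" and s': "s' permutes {0..<k*l}"
    and rel: "\<forall>x<k*l. \<forall>y<k*l. inv s x div k = inv s y div k \<longleftrightarrow> inv s' x div k = inv s' y div k"
  shows "part_act s (block_partition k l) \<subseteq> part_act s' (block_partition k l)"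
proof
  fix B assume "B \<in> part_act s (block_partition k l)"
  then obtain c where c: "c < l" "B = {y. y < k*l \<and> inv s y div k = c}"
    using mem_part_act_block_partition[OF k s] by blast
  define x where "x = s (c * k)"
  have "c * k < k * l" using c k by simp
  then have x: "x < k*l" "inv s x div k = c"
    unfolding x_def using permutes_less_iff[OF s] permutes_inverses(2)[OF s] k by auto
  have "B = {y. y < k*l \<and> inv s y div k = inv s x div k}" using c x by simp
  also have "\<dots> = {y. y < k*l \<and> inv s' y div k = inv s' x div k}"
    using rel x(1) by (intro Collect_cong) blast
  finally show "B \<in> part_act s' (block_partition k l)"
    using part_in_part_act_block_partition[OF k s' x(1)] by simp
qed

lemma part_act_block_partition_eq_iff:
  assumes k: "0 < k" and t: "t permutes {0..<k*l}" and t': "t' permutes {0..<k*l}"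
  shows "part_act t (block_partition k l) = part_act t' (block_partition k l) \<longleftrightarrow>
    (\<forall>x<k*l. \<forall>y<k*l. inv t x div k = inv t y div k \<longleftrightarrow> inv t' x div k = inv t' y div k)"
    (is "?eq \<longleftrightarrow> ?rel t t'")
proof
  show "?rel t t'" if ?eq
  proof (intro allI impI)
    fix x y assume xy: "x < k*l" "y < k*l"
    let ?B = "{y. y < k*l \<and> inv t y div k = inv t x div k}"
    have "?B \<in> part_act t' (block_partition k l)"
      using part_in_part_act_block_partition[OF k t xy(1)] \<open>?eq\<close> by simp
    then obtain c where c: "?B = {y. y < k*l \<and> inv t' y div k = c}"
      using mem_part_act_block_partition[OF k t'] by blast
    have "x \<in> ?B" using xy(1) by simp
    then have "inv t' x div k = c" unfolding c by simp
    moreover have "y \<in> ?B \<longleftrightarrow> y \<in> {y. y < k*l \<and> inv t' y div k = c}" unfolding c ..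
    ultimately show "inv t x div k = inv t y div k \<longleftrightarrow> inv t' x div k = inv t' y div k"
      using xy(2) by (simp add: eq_commute)
  qed
  show ?eq if rel: "?rel t t'"
  proof -
    have "?rel t' t" using rel by (simp add: eq_commute)
    then show ?eq
      using part_act_block_partition_subset[OF k t t' rel] part_act_block_partition_subset[OF k t' t]
      by blast
  qed
qed

lemma part_act_block_partition_eq_self_iff:
  assumes "0 < k" and "t permutes {0..<k*l}"
  shows "part_act t (block_partition k l) = block_partition k l \<longleftrightarrow>
    (\<forall>x<k*l. \<forall>y<k*l. inv t x div k = inv t y div k \<longleftrightarrow> x div k = y div k)"
  using part_act_block_partition_eq_iff[OF assms permutes_id] by (simp add: part_act_id)

lemma block_stabiliser_div_eq_iff:
  assumes k: "0 < k" and g: "g permutes {0..<k*l}"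
    and stab: "part_act g (block_partition k l) = block_partition k l"
    and xy: "x < k*l" "y < k*l"
  shows "g x div k = g y div k \<longleftrightarrow> x div k = y div k"
proof -
  have "\<forall>x<k*l. \<forall>y<k*l. inv g x div k = inv g y div k \<longleftrightarrow> x div k = y div k"
    using stab unfolding part_act_block_partition_eq_self_iff[OF k g] .
  then have "inv g (g x) div k = inv g (g y) div k \<longleftrightarrow> g x div k = g y div k"
    using xy permutes_less_iff[OF g] by blast
  then show ?thesis by (simp add: permutes_inverses(2)[OF g])
qed

lemma part_act_transpose_in_block:
  assumes k: "0 < k" and ab: "a < k*l" "b < k*l" "a div k = b div k"
  shows "part_act (transpose a b) (block_partition k l) = block_partition k l"
proof -
  have "transpose a b x div k = x div k" for x using ab(3) by (simp add: transpose_def)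
  then show ?thesis
    using part_act_block_partition_eq_self_iff[OF k permutes_swap_id[of a "{0..<k*l}" b]] ab by simp
qed

lemma part_act_block_partition_neq:
  assumes "0 < k" "t permutes {0..<k*l}"
    and "x < k*l" "y < k*l" "x div k = y div k" "inv t x div k \<noteq> inv t y div k"
  shows "part_act t (block_partition k l) \<noteq> block_partition k l"
  unfolding part_act_block_partition_eq_self_iff[OF assms(1,2)] using assms(3-6) by blast

subsection \<open>The stabiliser of the block partition\<close>

text \<open>The element \<open>(\<sigma>; \<tau>)\<close> of the wreath product \<open>S\<^sub>k \<wr> S\<^sub>l\<close>: block \<open>c\<close> goes to block \<open>\<sigma> c\<close>,
  its \<open>u\<close>-th point to the \<open>\<tau> c u\<close>-th point there.\<close>

definition block_perm :: "nat \<Rightarrow> nat \<Rightarrow> (nat \<Rightarrow> nat) \<Rightarrow> (nat \<Rightarrow> nat \<Rightarrow> nat) \<Rightarrow> nat \<Rightarrow> nat" where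
  "block_perm k l \<sigma> \<tau> x = (if x < k*l then \<sigma> (x div k) * k + \<tau> (x div k) (x mod k) else x)"

lemma block_perm_apply: "c < l \<Longrightarrow> u < k \<Longrightarrow> block_perm k l \<sigma> \<tau> (c*k + u) = \<sigma> c * k + \<tau> c u"
  using block_pos_less[of c l u k] by (simp add: block_perm_def)

context
  fixes k l :: nat and \<sigma> :: "nat \<Rightarrow> nat" and \<tau> :: "nat \<Rightarrow> nat \<Rightarrow> nat"
  assumes k: "0 < k" and \<sigma>: "\<sigma> permutes {0..<l}" and \<tau>: "\<And>c. c < l \<Longrightarrow> \<tau> c permutes {0..<k}"
begin

private lemma block_perm_decomp:
  "x < k*l \<Longrightarrow> block_perm k l \<sigma> \<tau> x = \<sigma> (x div k) * k + \<tau> (x div k) (x mod k)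
    \<and> \<sigma> (x div k) < l \<and> \<tau> (x div k) (x mod k) < k"
  using k less_mult_iff_div_less[OF k] permutes_less_iff[OF \<sigma>] permutes_less_iff[OF \<tau>]
  by (simp add: block_perm_def)

lemma block_perm_permutes: "block_perm k l \<sigma> \<tau> permutes {0..<k*l}"
proof -
  let ?g = "block_perm k l \<sigma> \<tau>"
  have "?g ` {0..<k*l} \<subseteq> {0..<k*l}"
    using block_perm_decomp block_pos_less by fastforce
  moreover have inj: "inj_on ?g {0..<k*l}"
  proof (rule inj_onI)
    fix x y assume "x \<in> {0..<k*l}" "y \<in> {0..<k*l}" and e: "?g x = ?g y"
    then have "\<sigma> (x div k) = \<sigma> (y div k)" "\<tau> (x div k) (x mod k) = \<tau> (y div k) (y mod k)"
      using block_perm_decomp block_pos_eq_iff by (metis atLeastLessThan_iff)+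
    moreover from this(1) have "x div k = y div k" using permutes_inj[OF \<sigma>] by (simp add: inj_eq)
    moreover have "x div k < l" using \<open>x \<in> {0..<k*l}\<close> less_mult_iff_div_less[OF k] by simp
    ultimately have "x div k = y div k" "x mod k = y mod k"
      using permutes_inj[OF \<tau>] by (simp_all add: inj_eq)
    then show "x = y" by (metis div_mult_mod_eq)
  qed
  ultimately have "bij_betw ?g {0..<k*l} {0..<k*l}"
    unfolding bij_betw_def using endo_inj_surj[OF _ _ inj] by simp
  then show ?thesis by (rule bij_imp_permutes) (simp add: block_perm_def)
qed

lemma part_act_block_perm: "part_act (block_perm k l \<sigma> \<tau>) (block_partition k l) = block_partition k l"
proof -
  let ?g = "block_perm k l \<sigma> \<tau>"
  have "?g ` block k c = block k (\<sigma> c)" if c: "c < l" for c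
  proof -
    have "?g ` block k c \<subseteq> block k (\<sigma> c)"
    proof
      fix y assume "y \<in> ?g ` block k c"
      then obtain u where u: "u < k" "y = ?g (c*k + u)"
        unfolding block_def by (auto, metis add_less_cancel_left le_iff_add)
      then have "y = \<sigma> c * k + \<tau> c u" "\<tau> c u < k"
        using c block_perm_apply permutes_less_iff[OF \<tau>[OF c]] by auto
      then show "y \<in> block k (\<sigma> c)" using k by (simp add: mem_block_iff)
    qed
    moreover have "card (?g ` block k c) = card (block k (\<sigma> c))"
      using card_image[OF inj_on_subset[OF permutes_inj[OF block_perm_permutes]]]
      by (simp add: block_def)
    ultimately show ?thesis by (simp add: card_subset_eq block_def)
  qed
  then have "part_act ?g (block_partition k l) = block k ` (\<sigma> ` {0..<l})"
    unfolding part_act_def block_partition_def image_image by (auto simp: image_iff)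
  then show ?thesis using permutes_image[OF \<sigma>] by (simp add: block_partition_def)
qed

end

lemma exists_permutes_extending:
  assumes S: "finite S" and inj: "inj_on \<phi> D" and DS: "D \<subseteq> S" and \<phi>D: "\<phi> ` D \<subseteq> S"
  obtains p where "p permutes S" "\<And>x. x \<in> D \<Longrightarrow> p x = \<phi> x"
proof -
  have fD: "finite D" using S DS finite_subset by blast
  have "card (S - D) = card (S - \<phi> ` D)"
    using card_Diff_subset[OF fD DS] card_Diff_subset[OF finite_imageI[OF fD] \<phi>D] card_image[OF inj]
    by simp
  then obtain h where h: "bij_betw h (S - D) (S - \<phi> ` D)"
    using finite_same_card_bij S by (meson finite_Diff)
  define p where "p x = (if x \<in> D then \<phi> x else if x \<in> S then h x else x)" for x
  have "bij_betw p D (\<phi> ` D)" unfolding p_def bij_betw_def using inj by (auto simp: inj_on_def)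
  moreover have "bij_betw p (S - D) (S - \<phi> ` D)" using h unfolding p_def
    by (rule bij_betw_cong[THEN iffD1, rotated]) auto
  ultimately have "bij_betw p (D \<union> (S - D)) (\<phi> ` D \<union> (S - \<phi> ` D))"
    by (rule bij_betw_combine) auto
  moreover have "D \<union> (S - D) = S" "\<phi> ` D \<union> (S - \<phi> ` D) = S" using DS \<phi>D by auto
  ultimately have "p permutes S" by (intro bij_imp_permutes) (use DS in \<open>auto simp: p_def\<close>)
  then show ?thesis using that by (simp add: p_def)
qed

lemma exists_block_stabiliser:
  assumes k: "0 < k"
    and C: "inj_on \<phi> C" "C \<subseteq> {0..<l}" "\<phi> ` C \<subseteq> {0..<l}"
    and D: "\<And>c. c \<in> C \<Longrightarrow> inj_on (\<psi> c) (D c) \<and> D c \<subseteq> {0..<k} \<and> \<psi> c ` D c \<subseteq> {0..<k}"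
  obtains g where "g permutes {0..<k*l}" "part_act g (block_partition k l) = block_partition k l"
    "\<And>c u. c \<in> C \<Longrightarrow> u \<in> D c \<Longrightarrow> g (c*k + u) = \<phi> c * k + \<psi> c u"
proof -
  obtain \<sigma> where \<sigma>: "\<sigma> permutes {0..<l}" "\<And>c. c \<in> C \<Longrightarrow> \<sigma> c = \<phi> c"
    using exists_permutes_extending[OF finite_atLeastLessThan C] by metis
  define \<tau> where
    "\<tau> c = (if c \<in> C then (SOME p. p permutes {0..<k} \<and> (\<forall>u\<in>D c. p u = \<psi> c u)) else id)" for c
  have \<tau>: "\<tau> c permutes {0..<k} \<and> (\<forall>u\<in>D c. \<tau> c u = \<psi> c u)" if c: "c \<in> C" for c
  proof -
    obtain p where "p permutes {0..<k}" "\<And>u. u \<in> D c \<Longrightarrow> p u = \<psi> c u"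
      using exists_permutes_extending[of "{0..<k}" "\<psi> c" "D c"] D[OF c] by auto
    then have "\<exists>p. p permutes {0..<k} \<and> (\<forall>u\<in>D c. p u = \<psi> c u)" by blast
    from someI_ex[OF this] show ?thesis unfolding \<tau>_def using c by simp
  qed
  then have "\<tau> c permutes {0..<k}" for c by (cases "c \<in> C") (auto simp: \<tau>_def permutes_id)
  then have "block_perm k l \<sigma> \<tau> permutes {0..<k*l}"
    "part_act (block_perm k l \<sigma> \<tau>) (block_partition k l) = block_partition k l"
    using block_perm_permutes[OF k \<sigma>(1)] part_act_block_perm[OF k \<sigma>(1)] by blast+
  moreover have "block_perm k l \<sigma> \<tau> (c*k + u) = \<phi> c * k + \<psi> c u" if cu: "c \<in> C" "u \<in> D c" for c u
  proof -
    have "c < l" "u < k" using cu C(2) D[OF cu(1)] by auto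
    then show ?thesis using block_perm_apply \<sigma>(2)[OF cu(1)] \<tau>[OF cu(1)] cu(2) by simp
  qed
  ultimately show ?thesis by (rule that)
qed

definition incr_pairs :: "nat \<Rightarrow> (nat \<times> nat) set" where
  "incr_pairs l = {(i, j). i < j \<and> j < l}"

definition incr_triples :: "nat \<Rightarrow> (nat \<times> nat \<times> nat) set" where
  "incr_triples l = {(i, j, h). i < j \<and> j < h \<and> h < l}"

lemma finite_incr_pairs: "finite (incr_pairs l)"
  by (rule finite_subset[of _ "{0..<l} \<times> {0..<l}"]) (auto simp: incr_pairs_def)

lemma finite_incr_triples: "finite (incr_triples l)"
  by (rule finite_subset[of _ "{0..<l} \<times> {0..<l} \<times> {0..<l}"]) (auto simp: incr_triples_def)

lemma card_incr_pairs: "2 * card (incr_pairs l) = l * (l - 1)"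
proof (induction l)
  case 0
  then show ?case by (simp add: incr_pairs_def)
next
  case (Suc l)
  have "incr_pairs (Suc l) = incr_pairs l \<union> (\<lambda>i. (i, l)) ` {0..<l}"
    unfolding incr_pairs_def by auto
  moreover have "incr_pairs l \<inter> (\<lambda>i. (i, l)) ` {0..<l} = {}" by (auto simp: incr_pairs_def)
  ultimately have "card (incr_pairs (Suc l)) = card (incr_pairs l) + l"
    by (simp add: card_Un_disjoint finite_incr_pairs card_image inj_on_def)
  then show ?case using Suc by (cases l) (auto simp: algebra_simps)
qed

lemma card_incr_triples: "6 * card (incr_triples l) = l * (l - 1) * (l - 2)"
proof (induction l)
  case 0
  have "incr_triples 0 = {}" by (auto simp: incr_triples_def)
  then show ?case by simp
next
  case (Suc l)
  have "incr_triples (Suc l) = incr_triples l \<union> (\<lambda>(i, j). (i, j, l)) ` incr_pairs l"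
    unfolding incr_triples_def incr_pairs_def by (fastforce simp: less_Suc_eq image_iff)
  moreover have "incr_triples l \<inter> (\<lambda>(i, j). (i, j, l)) ` incr_pairs l = {}"
    by (auto simp: incr_triples_def)
  moreover have "inj_on (\<lambda>(i, j). (i, j, l)) (incr_pairs l)" by (auto simp: inj_on_def)
  ultimately have "card (incr_triples (Suc l)) = card (incr_triples l) + card (incr_pairs l)"
    by (simp add: card_Un_disjoint finite_incr_triples finite_incr_pairs card_image)
  then have "6 * card (incr_triples (Suc l)) = l * (l - 1) * (l - 2) + 3 * (l * (l - 1))"
    using Suc card_incr_pairs[of l] by simp
  also have "\<dots> = Suc l * (Suc l - 1) * (Suc l - 2)"
    by (cases l; cases "l - 1") (auto simp: algebra_simps)
  finally show ?case .
qed

subsection \<open>The suborbit of a single swap\<close>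

lemma single_swap_suborbit_subset:
  assumes G: "G = Alt (k*l) \<or> G = Sym (k*l)" and k: "0 < k" and l: "2 \<le> l"
  shows "stab_orbit G part_act (block_partition k l) (part_act (transpose 0 k) (block_partition k l))
    \<subseteq> (\<lambda>((i, j), u, v). part_act (transpose (i*k + u) (j*k + v)) (block_partition k l))
        ` (incr_pairs l \<times> {0..<k} \<times> {0..<k})"
proof
  fix P assume "P \<in> stab_orbit G part_act (block_partition k l) (part_act (transpose 0 k) (block_partition k l))"
  then obtain g where g: "g permutes {0..<k*l}" "part_act g (block_partition k l) = block_partition k l"
    and P: "P = part_act g (part_act (transpose 0 k) (block_partition k l))"
    using stab_orbit_alt_symE[OF G] by blast
  let ?a = "g 0" and ?b = "g k"
  have P': "P = part_act (transpose ?a ?b) (block_partition k l)"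
    using P part_act_stabiliser_transpose(1)[OF g] by simp
  have "0 < k*l" "k < k*l" using k l by auto
  then have ab: "?a div k \<noteq> ?b div k" "?a div k < l" "?b div k < l"
    using block_stabiliser_div_eq_iff[OF k g] k permutes_less_iff[OF g(1)] less_mult_iff_div_less[OF k]
    by auto
  have ab': "?a = ?a div k * k + ?a mod k" "?b = ?b div k * k + ?b mod k" "?a mod k < k" "?b mod k < k"
    using k by simp_all
  from ab consider "?a div k < ?b div k" | "?b div k < ?a div k" by linarith
  then show "P \<in> (\<lambda>((i, j), u, v). part_act (transpose (i*k + u) (j*k + v)) (block_partition k l))
        ` (incr_pairs l \<times> {0..<k} \<times> {0..<k})"
  proof cases
    case 1
    then show ?thesis using P' ab ab'
      by (intro image_eqI[where x="((?a div k, ?b div k), ?a mod k, ?b mod k)"]) (auto simp: incr_pairs_def)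
  next
    case 2
    then show ?thesis using P' ab ab' transpose_commute[of ?a ?b]
      by (intro image_eqI[where x="((?b div k, ?a div k), ?b mod k, ?a mod k)"]) (auto simp: incr_pairs_def)
  qed
qed

definition partner :: "nat \<Rightarrow> nat" where
  "partner x = 2 * (x div 2) + (1 - x mod 2)"

lemma partner_div [simp]: "partner x div 2 = x div 2"
  and partner_neq: "partner x \<noteq> x"
  and partner_cases: "z div 2 = x div 2 \<Longrightarrow> z = x \<or> z = partner x"
proof -
  have m: "x mod 2 = 0 \<or> x mod 2 = 1" "z mod 2 = 0 \<or> z mod 2 = 1" by auto
  have e: "x = 2 * (x div 2) + x mod 2" "z = 2 * (z div 2) + z mod 2" by auto
  show "partner x div 2 = x div 2" unfolding partner_def using m by auto
  show "partner x \<noteq> x" unfolding partner_def using m e by linarith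
  show "z div 2 = x div 2 \<Longrightarrow> z = x \<or> z = partner x" unfolding partner_def using m e by linarith
qed

lemma part_act_transpose_partners:
  assumes ab: "a < 2*l" "b < 2*l" "a div 2 \<noteq> b div 2"
  shows "part_act (transpose a b) (block_partition 2 l)
    = part_act (transpose (partner a) (partner b)) (block_partition 2 l)"
proof -
  have lt: "partner a < 2*l" "partner b < 2*l" using ab less_mult_iff_div_less[of 2] by auto
  define swap_ab where "swap_ab c = (if c = a div 2 then b div 2 else if c = b div 2 then a div 2 else c)" for c
  have key: "transpose (partner a) (partner b) z div 2 = swap_ab (transpose a b z div 2)" for z
  proof -
    have "a \<noteq> b" "a \<noteq> partner b" "partner a \<noteq> b" "partner a \<noteq> partner b"
      using ab(3) partner_div by metis+
    note distinct = this partner_neq[of a] partner_neq[of b]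
    consider "z = a" | "z = partner a" | "z = b" | "z = partner b" | "z \<notin> {a, partner a, b, partner b}"
      by blast
    then show ?thesis
    proof cases
      case 5
      then have "z div 2 \<noteq> a div 2" "z div 2 \<noteq> b div 2" using partner_cases by blast+
      then show ?thesis using 5 unfolding swap_ab_def by (auto simp: transpose_def)
    qed (use distinct ab(3) in \<open>auto simp: transpose_def swap_ab_def\<close>)
  qed
  have swap_ab_eq_iff: "swap_ab c = swap_ab d \<longleftrightarrow> c = d" for c d unfolding swap_ab_def by auto
  have "transpose a b permutes {0..<2*l}" "transpose (partner a) (partner b) permutes {0..<2*l}"
    using transpose_permutes ab lt by simp_all
  then show ?thesis
    by (simp add: part_act_block_partition_eq_iff[OF zero_less_numeral] key swap_ab_eq_iff)
qed

lemma single_swap_suborbit_subset_two: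
  assumes G: "G = Alt (2*l) \<or> G = Sym (2*l)" and l: "2 \<le> l"
  shows "stab_orbit G part_act (block_partition 2 l) (part_act (transpose 0 2) (block_partition 2 l))
    \<subseteq> (\<lambda>((i, j), v). part_act (transpose (i*2) (j*2 + v)) (block_partition 2 l)) ` (incr_pairs l \<times> {0..<2})"
proof
  fix P assume "P \<in> stab_orbit G part_act (block_partition 2 l) (part_act (transpose 0 2) (block_partition 2 l))"
  then obtain i j u v where ij: "(i, j) \<in> incr_pairs l" "u < 2" "v < 2"
    and P: "P = part_act (transpose (i*2 + u) (j*2 + v)) (block_partition 2 l)"
    using single_swap_suborbit_subset[OF G _ l] by fastforce
  show "P \<in> (\<lambda>((i, j), v). part_act (transpose (i*2) (j*2 + v)) (block_partition 2 l)) ` (incr_pairs l \<times> {0..<2})"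
  proof (cases "u = 0")
    case True
    then show ?thesis using ij P by force
  next
    case False
    then have u: "u = 1" using ij by simp
    have "i*2 + u < 2*l" "j*2 + v < 2*l" "(i*2 + u) div 2 \<noteq> (j*2 + v) div 2"
      using ij block_pos_less[of i l] block_pos_less[of j l] by (auto simp: incr_pairs_def)
    then have "P = part_act (transpose (partner (i*2 + u)) (partner (j*2 + v))) (block_partition 2 l)"
      using part_act_transpose_partners P by simp
    moreover have "partner (i*2 + 1) = i*2" unfolding partner_def by presburger
    moreover have "partner (j*2 + v) = j*2 + (1 - v)" using ij(3) by (auto simp: partner_def)
    ultimately show ?thesis using ij u by (intro image_eqI[where x="((i, j), 1 - v)"]) auto
  qed
qed

subsection \<open>The suborbit of a double swap\<close>

definition double_swap :: "nat \<Rightarrow> nat \<Rightarrow> (nat \<times> nat) \<times> nat \<times> (nat \<times> nat) \<Rightarrow> nat set set" where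
  "double_swap k l = (\<lambda>((i, j), r, (s, s')).
     part_act (transpose (i*k) (j*k + s) \<circ> transpose (i*k + r) (j*k + s')) (block_partition k l))"

definition double_swap_params :: "nat \<Rightarrow> nat \<Rightarrow> ((nat \<times> nat) \<times> nat \<times> (nat \<times> nat)) set" where
  "double_swap_params k l = incr_pairs l \<times> {1..<k} \<times> incr_pairs k"

text \<open>The index of the part of \<open>double_swap k l ((i, j), r, (s, s'))\<close> containing \<open>x\<close>.\<close>

definition double_swap_part :: "nat \<Rightarrow> nat \<Rightarrow> nat \<Rightarrow> nat \<Rightarrow> nat \<Rightarrow> nat \<Rightarrow> nat \<Rightarrow> nat" where
  "double_swap_part k i j r s s' x =
     (if x = i*k \<or> x = i*k + r then j else if x = j*k + s \<or> x = j*k + s' then i else x div k)"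

lemma double_swap_part_apply:
  assumes "u < k" "r < k" "s < k" "s' < k"
  shows "double_swap_part k i j r s s' (c*k + u) =
    (if c = i \<and> (u = 0 \<or> u = r) then j else if c = j \<and> (u = s \<or> u = s') then i else c)"
proof -
  have "c*k + u = i*k \<longleftrightarrow> c = i \<and> u = 0" using block_pos_eq_iff[of u k 0 c i] assms by simp
  moreover have "c*k + u = i*k + r \<longleftrightarrow> c = i \<and> u = r" "c*k + u = j*k + s \<longleftrightarrow> c = j \<and> u = s"
    "c*k + u = j*k + s' \<longleftrightarrow> c = j \<and> u = s'"
    using block_pos_eq_iff assms by blast+
  moreover have "(c*k + u) div k = c" using assms by simp
  ultimately show ?thesis by (auto simp: double_swap_part_def)
qed

lemma double_swap_parts_agree:
  assumes k: "0 < k" and p: "((i, j), r, (s, s')) \<in> double_swap_params k l"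
    and q: "((i', j'), r', (t, t')) \<in> double_swap_params k l"
    and eq: "double_swap k l ((i, j), r, (s, s')) = double_swap k l ((i', j'), r', (t, t'))"
    and xy: "x < k*l" "y < k*l"
  shows "double_swap_part k i j r s s' x = double_swap_part k i j r s s' y
    \<longleftrightarrow> double_swap_part k i' j' r' t t' x = double_swap_part k i' j' r' t t' y"
proof -
  have part: "transpose (i*k + r) (j*k + s') (transpose (i*k) (j*k + s) x) div k = double_swap_part k i j r s s' x"
    and perm: "transpose (i*k) (j*k + s) \<circ> transpose (i*k + r) (j*k + s') permutes {0..<k*l}"
    if "((i, j), r, (s, s')) \<in> double_swap_params k l" for i j r s s' x
  proof -
    have ij: "i < j" "j < l" "0 < r" "r < k" "s < s'" "s' < k"
      using that by (auto simp: double_swap_params_def incr_pairs_def)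
    then have "i*k \<noteq> j*k + s" "i*k \<noteq> j*k + s'" "i*k + r \<noteq> j*k + s" "i*k + r \<noteq> j*k + s'"
      "(i*k + r) div k = i" "(j*k + s) div k = j" "(j*k + s') div k = j"
      using block_pos_eq_iff[of _ k] block_pos_eq_iff[of 0 k, simplified] by auto
    then show "transpose (i*k + r) (j*k + s') (transpose (i*k) (j*k + s) x) div k
        = double_swap_part k i j r s s' x"
      using ij by (auto simp: double_swap_part_def transpose_def)
    show "transpose (i*k) (j*k + s) \<circ> transpose (i*k + r) (j*k + s') permutes {0..<k*l}"
      using ij block_pos_less[of i l] block_pos_less[of j l]
      by (intro permutes_compose transpose_permutes) auto
  qed
  have "part_act (transpose (i*k) (j*k + s) \<circ> transpose (i*k + r) (j*k + s')) (block_partition k l)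
    = part_act (transpose (i'*k) (j'*k + t) \<circ> transpose (i'*k + r') (j'*k + t')) (block_partition k l)"
    using eq by (simp add: double_swap_def)
  then show ?thesis
    using xy part[OF p] part[OF q]
    unfolding part_act_block_partition_eq_iff[OF k perm[OF p] perm[OF q]]
    by (simp add: inv_transpose_comp)
qed

lemma double_swap_blocks:
  assumes k: "3 \<le> k" and p: "i < j" "j < l" "0 < r" "r < k" "s < s'" "s' < k"
    and q: "r' < k" "t < k" "t' < k"
    and agree: "\<And>x y. x < k*l \<Longrightarrow> y < k*l \<Longrightarrow>
      double_swap_part k i j r s s' x = double_swap_part k i j r s s' y
      \<longleftrightarrow> double_swap_part k i' j' r' t t' x = double_swap_part k i' j' r' t t' y"
  shows "i \<in> {i', j'}" "j \<in> {i', j'}"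
proof -
  have part_p: "double_swap_part k i j r s s' (c*k + u) =
      (if c = i \<and> (u = 0 \<or> u = r) then j else if c = j \<and> (u = s \<or> u = s') then i else c)"
    and part_q: "double_swap_part k i' j' r' t t' (c*k + u) =
      (if c = i' \<and> (u = 0 \<or> u = r') then j' else if c = j' \<and> (u = t \<or> u = t') then i' else c)"
    if "u < k" for c u
    using double_swap_part_apply that p q by auto
  have "c*k + u < k*l" if "c < l" "u < k" for c u using block_pos_less that by blast
  then have in_range: "i*k + u < k*l" "j*k + u < k*l" if "u < k" for u using that p by auto
  obtain w where w: "w < k" "w \<noteq> 0" "w \<noteq> r"
    using k by (intro that[of "if r = 1 then 2 else 1"]) auto
  show "i \<in> {i', j'}"
  proof (rule ccontr)
    assume "i \<notin> {i', j'}"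
    then show False
      using agree[OF in_range(1)[of 0] in_range(1)[OF w(1)]] part_p[of 0 i] part_p[of w i]
        part_q[of 0 i] part_q[of w i] p w by auto
  qed
  obtain w where w: "w < k" "w \<noteq> s" "w \<noteq> s'"
    using k p(5,6) by (intro that[of "if s \<noteq> 0 then 0 else if s' \<noteq> 1 then 1 else 2"]) auto
  show "j \<in> {i', j'}"
  proof (rule ccontr)
    assume "j \<notin> {i', j'}"
    then show False
      using agree[OF in_range(2)[of s] in_range(2)[OF w(1)]] part_p[of s j] part_p[of w j]
        part_q[of s j] part_q[of w j] p w by auto
  qed
qed

lemma inj_on_double_swap:
  assumes k: "3 \<le> k"
  shows "inj_on (double_swap k l) (double_swap_params k l)"
proof (rule inj_onI)
  fix p q assume p: "p \<in> double_swap_params k l" and q: "q \<in> double_swap_params k l"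
    and eq: "double_swap k l p = double_swap k l q"
  obtain i j r s s' i' j' r' t t' where pq: "p = ((i, j), r, (s, s'))" "q = ((i', j'), r', (t, t'))"
    by (metis prod.exhaust)
  have ps: "i < j" "j < l" "0 < r" "r < k" "s < s'" "s' < k"
    and qs: "i' < j'" "j' < l" "0 < r'" "r' < k" "t < t'" "t' < k"
    using p q pq by (auto simp: double_swap_params_def incr_pairs_def)
  have agree: "\<And>x y. x < k*l \<Longrightarrow> y < k*l \<Longrightarrow>
      double_swap_part k i j r s s' x = double_swap_part k i j r s s' y
      \<longleftrightarrow> double_swap_part k i' j' r' t t' x = double_swap_part k i' j' r' t t' y"
    using double_swap_parts_agree[of k i j r s s' l i' j' r' t t'] p q eq pq k by auto
  have part_p: "double_swap_part k i j r s s' (c*k + u) =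
      (if c = i \<and> (u = 0 \<or> u = r) then j else if c = j \<and> (u = s \<or> u = s') then i else c)"
    and part_q: "double_swap_part k i' j' r' t t' (c*k + u) =
      (if c = i' \<and> (u = 0 \<or> u = r') then j' else if c = j' \<and> (u = t \<or> u = t') then i' else c)"
    if "u < k" for c u
    using double_swap_part_apply that ps qs by auto
  have in_range: "i*k + u < k*l" "j*k + u < k*l" if "u < k" for u
    using block_pos_less that ps by auto
  have "i \<in> {i', j'}" "j \<in> {i', j'}"
    using double_swap_blocks[OF k ps qs(4) order.strict_trans[OF qs(5,6)] qs(6) agree] by auto
  then have ij: "i' = i" "j' = j" using ps qs by auto
  have "i*k < k*l" "i*k + r < k*l" using in_range[of 0] in_range[OF ps(4)] k by simp_all
  then have "r' = r"
    using agree part_p[of 0 i] part_p[of r i] part_q[of 0 i] part_q[of r i] ps qs ij k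
    by (fastforce split: if_splits)
  moreover have "(w = s \<or> w = s') \<longleftrightarrow> (w = t \<or> w = t')" if w: "w < k" for w
  proof -
    have "i*k < k*l" "j*k + w < k*l" using in_range[of 0] in_range[OF w] k by simp_all
    from agree[OF this] show ?thesis
      using part_p[of 0 i] part_p[of w j] part_q[of 0 i] part_q[of w j] ps qs ij k w
      by (auto split: if_splits)
  qed
  then have "t = s" "t' = s'" using ps qs by (metis less_irrefl less_trans)+
  ultimately show "p = q" using pq ij by simp
qed

lemma double_swap_in_suborbit:
  assumes G: "G = Alt (k*l) \<or> G = Sym (k*l)" and k: "4 \<le> k" and l: "2 \<le> l"
    and p: "p \<in> double_swap_params k l"
  shows "double_swap k l p
    \<in> stab_orbit G part_act (block_partition k l) (double_swap k l ((0, 1), 1, (0, 1)))"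
proof -
  obtain i j r s s' where p': "p = ((i, j), r, (s, s'))" by (metis prod.exhaust)
  have ps: "i < j" "j < l" "0 < r" "r < k" "s < s'" "s' < k"
    using p p' by (auto simp: double_swap_params_def incr_pairs_def)
  let ?\<phi> = "\<lambda>c. if c = 0 then i else j"
  let ?\<psi> = "\<lambda>c u. if c = 0 then (if u = 0 then 0 else r) else (if u = 0 then s else s')"
  obtain g where g: "g permutes {0..<k*l}" "part_act g (block_partition k l) = block_partition k l"
    "\<And>c u. c \<in> {0, 1} \<Longrightarrow> u \<in> {0, 1} \<Longrightarrow> g (c*k + u) = ?\<phi> c * k + ?\<psi> c u"
    by (rule exists_block_stabiliser[where k = k and l = l and \<phi> = ?\<phi> and C = "{0, 1}" and D = "\<lambda>_. {0, 1}" and \<psi> = ?\<psi>])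
      (use k l ps in \<open>auto simp: inj_on_def\<close>)
  let ?h = "transpose 0 k \<circ> transpose 1 (k + 1)"
  have base: "double_swap k l ((0, 1), 1, (0, 1)) = part_act ?h (block_partition k l)"
    by (simp add: double_swap_def)
  have "g 0 = i*k" "g 1 = i*k + r" "g k = j*k + s" "g (k + 1) = j*k + s'"
    using g(3)[of 0 0] g(3)[of 0 1] g(3)[of 1 0] g(3)[of 1 1] by simp_all
  then have image: "part_act g (double_swap k l ((0, 1), 1, (0, 1))) = double_swap k l p"
    unfolding base part_act_stabiliser_transpose(2)[OF g(1,2)] by (simp add: double_swap_def p')
  have "k \<le> k*l" using l by simp
  then have "3 < k*l" using k by linarith
  then have \<tau>: "transpose 2 3 permutes {0..<k*l}"
    "part_act (transpose 2 3) (block_partition k l) = block_partition k l"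
    using k transpose_permutes part_act_transpose_in_block[of k 2 l 3] by auto
  moreover have "transpose 2 3 \<circ> transpose 0 k = transpose 0 k \<circ> transpose 2 3"
    "transpose 2 3 \<circ> transpose 1 (k + 1) = transpose 1 (k + 1) \<circ> transpose 2 3"
    using k transpose_comp_commute[where a = 2 and b = 3 and c = 0 and d = k]
      transpose_comp_commute[where a = 2 and b = 3 and c = 1 and d = "k + 1"] by simp_all
  then have "transpose 2 3 \<circ> ?h = ?h \<circ> transpose 2 3" by (metis comp_assoc)
  then have "part_act (transpose 2 3) (double_swap k l ((0, 1), 1, (0, 1))) = double_swap k l ((0, 1), 1, (0, 1))"
    unfolding base by (rule part_act_commuting[OF _ \<tau>(2)])
  moreover have "\<not> evenperm (transpose 2 3 :: nat \<Rightarrow> nat)" by (simp add: evenperm_swap)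
  ultimately show ?thesis
    using part_act_in_stab_orbit[OF G g(1,2)] image by metis
qed

subsection \<open>The suborbit of a three-cycle\<close>

text \<open>The partition obtained by moving \<open>x\<close> to \<open>y\<close>, \<open>y\<close> to \<open>z\<close> and \<open>z\<close> to \<open>x\<close>.\<close>

definition three_cycle :: "nat \<Rightarrow> nat \<Rightarrow> nat \<times> nat \<times> nat \<Rightarrow> nat set set" where
  "three_cycle k l = (\<lambda>(x, y, z). part_act (transpose x y \<circ> transpose y z) (block_partition k l))"

text \<open>Requiring the block of \<open>x\<close> to be the smallest of the three removes the rotations of a cycle;
  for blocks of size two the position of \<open>x\<close> must also be fixed, since there a point and its
  partner play the same role.\<close>

definition three_cycle_params :: "nat \<Rightarrow> nat \<Rightarrow> nat set \<Rightarrow> (nat \<times> nat \<times> nat) set" where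
  "three_cycle_params k l U = {(x, y, z). x < k*l \<and> y < k*l \<and> z < k*l
     \<and> x div k < y div k \<and> x div k < z div k \<and> y div k \<noteq> z div k \<and> x mod k \<in> U}"

definition three_cycle_part :: "nat \<Rightarrow> nat \<Rightarrow> nat \<Rightarrow> nat \<Rightarrow> nat \<Rightarrow> nat" where
  "three_cycle_part k x y z p =
     (if p = x then z div k else if p = y then x div k else if p = z then y div k else p div k)"

lemma three_cycle_parts_agree:
  assumes k: "0 < k" and T: "(x, y, z) \<in> three_cycle_params k l U" "(x', y', z') \<in> three_cycle_params k l U'"
    and eq: "three_cycle k l (x, y, z) = three_cycle k l (x', y', z')" and pq: "p < k*l" "q < k*l"
  shows "three_cycle_part k x y z p = three_cycle_part k x y z q
    \<longleftrightarrow> three_cycle_part k x' y' z' p = three_cycle_part k x' y' z' q"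
proof -
  have part: "transpose y z (transpose x y p) div k = three_cycle_part k x y z p"
    and perm: "transpose x y \<circ> transpose y z permutes {0..<k*l}"
    if "(x, y, z) \<in> three_cycle_params k l U" for x y z U p
    using that by (auto simp: three_cycle_params_def three_cycle_part_def transpose_def
        intro!: permutes_compose transpose_permutes)
  show ?thesis
    using eq pq part[OF T(1)] part[OF T(2)]
      part_act_block_partition_eq_iff[OF k perm[OF T(1)] perm[OF T(2)]]
    by (simp add: three_cycle_def inv_transpose_comp)
qed

lemma exists_in_block_avoiding:
  assumes p: "p < k*l" and E: "finite E" "card E < k"
  obtains q where "q < k*l" "q div k = p div k" "q \<notin> E"
proof -
  have k: "0 < k" using E by simp
  have "card (block k (p div k)) = k" by (simp add: block_def)
  then have "\<not> block k (p div k) \<subseteq> E" using card_mono[OF E(1)] E(2) by (metis not_le)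
  then obtain q where q: "q \<in> block k (p div k)" "q \<notin> E" by blast
  have "q div k = p div k" using q(1) k by (simp add: mem_block_iff)
  moreover from this have "q < k*l" using p less_mult_iff_div_less[OF k] by simp
  ultimately show ?thesis using q(2) that by blast
qed

lemma three_cycle_part_const_on_block_iff:
  assumes k: "2 \<le> k" and T: "(x, y, z) \<in> three_cycle_params k l U"
  shows "(\<forall>p<k*l. \<forall>q<k*l. p div k = m \<longrightarrow> q div k = m \<longrightarrow>
      three_cycle_part k x y z p = three_cycle_part k x y z q)
    \<longleftrightarrow> m \<notin> {x div k, y div k, z div k}"
proof
  have t: "x < k*l" "y < k*l" "z < k*l" "x div k < y div k" "x div k < z div k" "y div k \<noteq> z div k"
    using T unfolding three_cycle_params_def by auto
  assume const: "\<forall>p<k*l. \<forall>q<k*l. p div k = m \<longrightarrow> q div k = m \<longrightarrow>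
      three_cycle_part k x y z p = three_cycle_part k x y z q"
  show "m \<notin> {x div k, y div k, z div k}"
  proof
    assume "m \<in> {x div k, y div k, z div k}"
    then obtain a where a: "a \<in> {x, y, z}" "a div k = m" by auto
    have "a < k*l" using a t by auto
    moreover have "card {a} < k" using k by simp
    ultimately obtain q where q: "q < k*l" "q div k = a div k" "q \<notin> {a}"
      using exists_in_block_avoiding[of a k l "{a}"] by blast
    then have "q \<notin> {x, y, z}" using a t by auto
    then have "three_cycle_part k x y z q = m" using q a by (auto simp: three_cycle_part_def)
    moreover have "three_cycle_part k x y z a \<noteq> m" using a t by (auto simp: three_cycle_part_def)
    moreover have "q div k = m" using q(2) a(2) by simp
    ultimately show False using const \<open>a < k*l\<close> q(1) a(2) by metis
  qed
next
  assume m: "m \<notin> {x div k, y div k, z div k}"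
  have "three_cycle_part k x y z p = m" if "p div k = m" for p
    using that m unfolding three_cycle_part_def by auto
  then show "\<forall>p<k*l. \<forall>q<k*l. p div k = m \<longrightarrow> q div k = m \<longrightarrow>
      three_cycle_part k x y z p = three_cycle_part k x y z q" by simp
qed

lemma three_cycle_moved_blocks_eq:
  assumes k: "2 \<le> k"
    and T: "(x, y, z) \<in> three_cycle_params k l U" and T': "(x', y', z') \<in> three_cycle_params k l U'"
    and agree: "\<And>p q. p < k*l \<Longrightarrow> q < k*l \<Longrightarrow> three_cycle_part k x y z p = three_cycle_part k x y z q
      \<longleftrightarrow> three_cycle_part k x' y' z' p = three_cycle_part k x' y' z' q"
  shows "{x div k, y div k, z div k} = {x' div k, y' div k, z' div k}"
proof -
  have "m \<notin> {x div k, y div k, z div k} \<longleftrightarrow> m \<notin> {x' div k, y' div k, z' div k}" for m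
    unfolding three_cycle_part_const_on_block_iff[OF k T, symmetric]
      three_cycle_part_const_on_block_iff[OF k T', symmetric]
    by (simp add: agree)
  then show ?thesis by blast
qed

context
  fixes k l :: nat and U :: "nat set" and x y z x' y' z' :: nat
  assumes k: "2 \<le> k" and U: "k = 2 \<and> U = {0} \<or> 3 \<le> k"
    and T: "(x, y, z) \<in> three_cycle_params k l U" and T': "(x', y', z') \<in> three_cycle_params k l U"
    and agree: "\<And>p q. p < k*l \<Longrightarrow> q < k*l \<Longrightarrow> three_cycle_part k x y z p = three_cycle_part k x y z q
      \<longleftrightarrow> three_cycle_part k x' y' z' p = three_cycle_part k x' y' z' q"
begin

private lemma params: "x < k*l" "y < k*l" "z < k*l" "x div k < y div k" "x div k < z div k"
    "y div k \<noteq> z div k" "x mod k \<in> U"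
  and params': "x' < k*l" "y' < k*l" "z' < k*l" "x' div k < y' div k" "x' div k < z' div k"
    "y' div k \<noteq> z' div k" "x' mod k \<in> U"
  using T T' unfolding three_cycle_params_def by auto

private lemma moved_blocks: "{x div k, y div k, z div k} = {x' div k, y' div k, z' div k}"
  using three_cycle_moved_blocks_eq[OF k T T' agree] .

private lemma start_eq: "x' = x"
proof -
  have "x' div k \<in> {x div k, y div k, z div k}" "x div k \<in> {x' div k, y' div k, z' div k}"
    using moved_blocks by auto
  then have x_block: "x' div k = x div k" using params(4,5) params'(4,5) by auto
  show ?thesis
  proof (cases "3 \<le> k")
    case False
    then have "x mod k = 0" "x' mod k = 0" using U params(7) params'(7) by auto
    then show ?thesis using x_block by (metis div_mult_mod_eq)
  next
    case True
    show ?thesis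
    proof (rule ccontr)
      assume ne: "x' \<noteq> x"
      have "card {x, x'} < k" using True by (simp add: card_insert_if)
      then obtain q where q: "q < k*l" "q div k = x div k" "q \<notin> {x, x'}"
        using exists_in_block_avoiding[OF params(1) finite.insertI[OF finite.insertI[OF finite.emptyI]]]
        by blast
      have "three_cycle_part k x y z x' = x div k" "three_cycle_part k x y z q = x div k"
        using ne q x_block params params' unfolding three_cycle_part_def by auto
      moreover have "three_cycle_part k x' y' z' x' \<noteq> three_cycle_part k x' y' z' q"
        using ne q x_block params params' unfolding three_cycle_part_def by auto
      ultimately show False using agree[OF params'(1) q(1)] by simp
    qed
  qed
qed

private lemma middle_eq: "y' = y"
proof (rule ccontr)
  assume ne: "y' \<noteq> y"
  have "card {x} < k" using k by simp
  then obtain p where p: "p < k*l" "p div k = x div k" "p \<notin> {x}"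
    using exists_in_block_avoiding[OF params(1) finite.insertI[OF finite.emptyI]] by blast
  have "three_cycle_part k x y z p = three_cycle_part k x y z y"
    using p params unfolding three_cycle_part_def by auto
  moreover have "three_cycle_part k x' y' z' p \<noteq> three_cycle_part k x' y' z' y"
    using p params params' ne start_eq unfolding three_cycle_part_def by auto
  ultimately show False using agree[OF p(1) params(2)] by simp
qed

lemma three_cycle_params_eq_if_parts_agree: "(x', y', z') = (x, y, z)"
proof -
  have "z' div k \<in> {x div k, y div k, z div k}" using moved_blocks by blast
  then have z_block: "z' div k = z div k" using params params' start_eq middle_eq by auto
  have "z' = z"
  proof (rule ccontr)
    assume "z' \<noteq> z"
    then have "three_cycle_part k x' y' z' x = three_cycle_part k x' y' z' z"
      using params params' start_eq middle_eq z_block unfolding three_cycle_part_def by auto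
    moreover have "three_cycle_part k x y z x \<noteq> three_cycle_part k x y z z"
      using params unfolding three_cycle_part_def by auto
    ultimately show False using agree[OF params(1) params(3)] by simp
  qed
  then show ?thesis using start_eq middle_eq by simp
qed

end

lemma inj_on_three_cycle:
  assumes k: "2 \<le> k" and U: "k = 2 \<and> U = {0} \<or> 3 \<le> k"
  shows "inj_on (three_cycle k l) (three_cycle_params k l U)"
proof (rule inj_onI)
  fix T T' assume T: "T \<in> three_cycle_params k l U" and T': "T' \<in> three_cycle_params k l U"
    and eq: "three_cycle k l T = three_cycle k l T'"
  obtain x y z x' y' z' where xyz: "T = (x, y, z)" "T' = (x', y', z')" by (metis prod.exhaust)
  show "T = T'"
    using three_cycle_params_eq_if_parts_agree[OF k U, of x y z l x' y' z'] T T' xyz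
      three_cycle_parts_agree[OF _ _ _ eq[unfolded xyz]] k
    by auto
qed

lemma all_less_six: "(\<forall>x<(6::nat). P x) \<longleftrightarrow> P 0 \<and> P 1 \<and> P 2 \<and> P 3 \<and> P 4 \<and> P 5"
proof -
  have "x < 6 \<longleftrightarrow> x = 0 \<or> x = 1 \<or> x = 2 \<or> x = 3 \<or> x = 4 \<or> x = 5" for x :: nat by presburger
  then show ?thesis by auto
qed

lemma transpose_stabilises_three_cycle:
  assumes k: "0 < k" and ab: "a < k*l" "b < k*l" "a div k = b div k" "a \<notin> {0, k, 2*k}" "b \<notin> {0, k, 2*k}"
  shows "part_act (transpose a b) (block_partition k l) = block_partition k l"
    and "part_act (transpose a b) (three_cycle k l (0, k, 2*k)) = three_cycle k l (0, k, 2*k)"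
proof -
  show stab: "part_act (transpose a b) (block_partition k l) = block_partition k l"
    using part_act_transpose_in_block ab k by simp
  let ?h = "transpose 0 k \<circ> transpose k (2*k)"
  have "transpose a b \<circ> transpose 0 k = transpose 0 k \<circ> transpose a b"
    "transpose a b \<circ> transpose k (2*k) = transpose k (2*k) \<circ> transpose a b"
    using ab transpose_comp_commute[of a 0 k b] transpose_comp_commute[of a k "2*k" b] by auto
  then have "transpose a b \<circ> ?h = ?h \<circ> transpose a b" by (metis comp_assoc)
  then show "part_act (transpose a b) (three_cycle k l (0, k, 2*k)) = three_cycle k l (0, k, 2*k)"
    unfolding three_cycle_def by (simp add: part_act_commuting[OF _ stab])
qed

text \<open>For six points no transposition fixes both partitions, so a product of three is used.\<close>

lemma odd_stabiliser_three_cycle_two_three: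
  obtains \<tau> where "\<tau> permutes {0..<2*3}" "\<not> evenperm \<tau>"
    "part_act \<tau> (block_partition 2 3) = block_partition 2 3"
    "part_act \<tau> (three_cycle 2 3 (0, 2, 2*2)) = three_cycle 2 3 (0, 2, 2*2)"
proof -
  define \<tau> where "\<tau> = transpose 0 1 \<circ> transpose 2 5 \<circ> transpose (3::nat) 4"
  let ?h = "transpose 0 2 \<circ> transpose 2 (4::nat)"
  have perm: "\<tau> permutes {0..<2*3}" unfolding \<tau>_def by (intro permutes_compose transpose_permutes) auto
  have h: "?h permutes {0..<2*3}" by (intro permutes_compose transpose_permutes) auto
  have "\<not> evenperm \<tau>"
    unfolding \<tau>_def by (simp add: evenperm_comp permutation_compose permutation_swap_id evenperm_swap)
  moreover have "inv \<tau> = \<tau>"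
    by (rule inv_unique_comp) (auto simp: \<tau>_def fun_eq_iff transpose_def)
  then have "part_act \<tau> (block_partition 2 3) = block_partition 2 3"
    using perm by (simp add: part_act_block_partition_eq_self_iff all_less_six \<tau>_def transpose_def)
  moreover have "inv (\<tau> \<circ> ?h) = transpose 2 4 \<circ> transpose 0 2 \<circ> \<tau>"
    using \<open>inv \<tau> = \<tau>\<close> permutes_bij[OF perm] permutes_bij[OF h]
    by (simp add: o_inv_distrib inv_transpose_comp comp_assoc)
  then have "part_act (\<tau> \<circ> ?h) (block_partition 2 3) = part_act ?h (block_partition 2 3)"
    using part_act_block_partition_eq_iff[OF _ permutes_compose[OF h perm] h]
    by (simp add: inv_transpose_comp all_less_six \<tau>_def transpose_def)
  ultimately show ?thesis using that perm by (simp add: part_act_comp three_cycle_def)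
qed

lemma odd_stabiliser_three_cycle:
  assumes k: "2 \<le> k" and l: "3 \<le> l"
  obtains \<tau> where "\<tau> permutes {0..<k*l}" "\<not> evenperm \<tau>"
    "part_act \<tau> (block_partition k l) = block_partition k l"
    "part_act \<tau> (three_cycle k l (0, k, 2*k)) = three_cycle k l (0, k, 2*k)"
proof -
  have "3 * k \<le> k * l" using l by simp
  then consider "3 \<le> k" "2 < k * l" | "k = 2" "4 \<le> l" | "k = 2" "l = 3" using k l by linarith
  then show ?thesis
  proof cases
    case 1
    show ?thesis
      by (rule that[of "transpose 1 2"])
        (use 1 transpose_stabilises_three_cycle[of k 1 l 2] in \<open>auto simp: transpose_permutes evenperm_swap\<close>)
  next
    case 2
    show ?thesis
      by (rule that[of "transpose 6 7"])
        (use 2 transpose_stabilises_three_cycle[of k 6 l 7] in \<open>auto simp: transpose_permutes evenperm_swap\<close>)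
  next
    case 3
    obtain \<tau> where "\<tau> permutes {0..<2*3}" "\<not> evenperm \<tau>"
      "part_act \<tau> (block_partition 2 3) = block_partition 2 3"
      "part_act \<tau> (three_cycle 2 3 (0, 2, 2*2)) = three_cycle 2 3 (0, 2, 2*2)"
      by (rule odd_stabiliser_three_cycle_two_three)
    then show ?thesis using that 3 by blast
  qed
qed

lemma three_cycle_in_suborbit:
  assumes G: "G = Alt (k*l) \<or> G = Sym (k*l)" and k: "2 \<le> k" and l: "3 \<le> l"
    and T: "T \<in> three_cycle_params k l U"
  shows "three_cycle k l T \<in> stab_orbit G part_act (block_partition k l) (three_cycle k l (0, k, 2*k))"
proof -
  obtain x y z where xyz: "T = (x, y, z)" by (metis prod.exhaust)
  have k0: "0 < k" using k by simp
  have t: "x < k*l" "y < k*l" "z < k*l" "x div k < y div k" "x div k < z div k" "y div k \<noteq> z div k"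
    using T xyz unfolding three_cycle_params_def by auto
  let ?\<phi> = "\<lambda>c. if c = 0 then x div k else if c = 1 then y div k else z div k"
  let ?\<psi> = "\<lambda>c u. if c = 0 then x mod k else if c = 1 then y mod k else z mod k"
  obtain g where g: "g permutes {0..<k*l}" "part_act g (block_partition k l) = block_partition k l"
    "\<And>c u. c \<in> {0, 1, 2} \<Longrightarrow> u \<in> {0} \<Longrightarrow> g (c*k + u) = ?\<phi> c * k + ?\<psi> c u"
    by (rule exists_block_stabiliser[where k = k and l = l and \<phi> = ?\<phi> and C = "{0, 1, 2}"
          and D = "\<lambda>_. {0}" and \<psi> = ?\<psi>])
      (use k0 l t less_mult_iff_div_less[OF k0] in \<open>auto simp: inj_on_def\<close>)
  have "g 0 = x" "g k = y" "g (2*k) = z"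
    using g(3)[of 0 0] g(3)[of 1 0] g(3)[of 2 0] by simp_all
  then have "part_act g (three_cycle k l (0, k, 2*k)) = three_cycle k l T"
    using part_act_stabiliser_transpose(2)[OF g(1,2)] xyz by (simp add: three_cycle_def)
  moreover obtain \<tau> where "\<tau> permutes {0..<k*l}" "\<not> evenperm \<tau>"
    "part_act \<tau> (block_partition k l) = block_partition k l"
    "part_act \<tau> (three_cycle k l (0, k, 2*k)) = three_cycle k l (0, k, 2*k)"
    using odd_stabiliser_three_cycle[OF k l] by blast
  ultimately show ?thesis using part_act_in_stab_orbit[OF G g(1,2)] by metis
qed

text \<open>Choose the blocks \<open>i < j < h\<close>, the positions in them, and whether \<open>y\<close> lies in block \<open>j\<close>
  or in block \<open>h\<close>.\<close>

definition three_cycle_choice :: "nat \<Rightarrow> (nat \<times> nat \<times> nat) \<times> nat \<times> nat \<times> nat \<times> bool \<Rightarrow> nat \<times> nat \<times> nat" where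
  "three_cycle_choice k = (\<lambda>((i, j, h), u, v, w, e).
     (i*k + u, if e then j*k + v else h*k + w, if e then h*k + w else j*k + v))"

lemma three_cycle_choice_in_params:
  assumes U: "U \<subseteq> {0..<k}"
  shows "three_cycle_choice k ` (incr_triples l \<times> U \<times> {0..<k} \<times> {0..<k} \<times> UNIV)
    \<subseteq> three_cycle_params k l U"
proof
  fix T assume "T \<in> three_cycle_choice k ` (incr_triples l \<times> U \<times> {0..<k} \<times> {0..<k} \<times> UNIV)"
  then obtain i j h u v w e where p: "(i, j, h) \<in> incr_triples l" "u \<in> U" "v < k" "w < k"
    and T: "T = three_cycle_choice k ((i, j, h), u, v, w, e)" by auto
  have ijh: "i < j" "j < h" "h < l" "u < k" using p U unfolding incr_triples_def by auto
  then have "i*k + u < k*l" "j*k + v < k*l" "h*k + w < k*l" using block_pos_less p by auto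
  then show "T \<in> three_cycle_params k l U"
    unfolding T three_cycle_choice_def three_cycle_params_def using ijh p by auto
qed

lemma inj_on_three_cycle_choice:
  assumes U: "U \<subseteq> {0..<k}"
  shows "inj_on (three_cycle_choice k) (incr_triples l \<times> U \<times> {0..<k} \<times> {0..<k} \<times> UNIV)"
proof (rule inj_onI)
  fix a b assume a: "a \<in> incr_triples l \<times> U \<times> {0..<k} \<times> {0..<k} \<times> UNIV"
    and b: "b \<in> incr_triples l \<times> U \<times> {0..<k} \<times> {0..<k} \<times> UNIV"
    and eq: "three_cycle_choice k a = three_cycle_choice k b"
  obtain i j h u v w e i' j' h' u' v' w' e' where ab: "a = ((i, j, h), u, v, w, e)"
    "b = ((i', j', h'), u', v', w', e')" by (metis prod.exhaust)
  have A: "i < j" "j < h" "u < k" "v < k" "w < k" and B: "i' < j'" "j' < h'" "u' < k" "v' < k" "w' < k"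
    using a b ab U unfolding incr_triples_def by auto
  have e1: "i*k + u = i'*k + u'"
    and e2: "(if e then j*k + v else h*k + w) = (if e' then j'*k + v' else h'*k + w')"
    and e3: "(if e then h*k + w else j*k + v) = (if e' then h'*k + w' else j'*k + v')"
    using eq ab unfolding three_cycle_choice_def by auto
  have "e = e'"
  proof (rule ccontr)
    assume "e \<noteq> e'"
    then have "(e \<and> j = h' \<and> h = j') \<or> (e' \<and> h = j' \<and> j = h')"
      using e2 e3 block_pos_eq_iff A B by (cases e) auto
    then show False using A B by auto
  qed
  then show "a = b" using ab e1 e2 e3 block_pos_eq_iff A B by (cases e) auto
qed

lemma card_three_cycle_params:
  assumes U: "U \<subseteq> {0..<k}"
  shows "card (incr_triples l) * card U * k * k * 2 \<le> card (three_cycle_params k l U)"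
proof -
  have "finite (three_cycle_params k l U)"
    by (rule finite_subset[of _ "{0..<k*l} \<times> {0..<k*l} \<times> {0..<k*l}"]) (auto simp: three_cycle_params_def)
  then have "card (incr_triples l \<times> U \<times> {0..<k} \<times> {0..<k} \<times> (UNIV :: bool set))
      \<le> card (three_cycle_params k l U)"
    using card_image[OF inj_on_three_cycle_choice[OF U]] card_mono three_cycle_choice_in_params[OF U]
    by metis
  then show ?thesis by (simp add: card_cartesian_product)
qed

subsection \<open>Six points in two blocks of three\<close>

lemma block_partition_three_two: "block_partition 3 2 = {{0..<3}, {3..<6}}"
proof -
  have "{0..<2::nat} = {0, 1}" by auto
  then show ?thesis by (simp add: block_partition_def block_def)
qed

lemma three_two_partition_cases_by_block:
  assumes P: "P = {B, C}" "B \<union> C = {0..<6}" "B \<inter> C = {}" "card B = 3"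
    and two: "2 \<le> card ({0..<3} \<inter> B)"
  shows "P = block_partition 3 2
    \<or> (\<exists>a b. a < 3 \<and> 3 \<le> b \<and> b < 6 \<and> P = part_act (transpose a b) (block_partition 3 2))"
proof -
  let ?X = "{0..<3::nat}" and ?Y = "{3..<6::nat}"
  have C: "C = {0..<6} - B" using P by auto
  have fin: "finite B" using P(2) by (metis finite_Un finite_atLeastLessThan)
  have "card (?X \<inter> B) \<le> 3" using card_mono[of ?X "?X \<inter> B"] by auto
  then consider "card (?X \<inter> B) = 3" | "card (?X \<inter> B) = 2" using two by linarith
  then show ?thesis
  proof cases
    case 1
    then have "?X \<subseteq> B" using card_subset_eq[of ?X "?X \<inter> B"] by auto
    then have "?X = B" using card_subset_eq[OF fin] P(4) by simp
    then show ?thesis using C P(1) block_partition_three_two by auto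
  next
    case 2
    have "card (?X - B) = 1" using 2 card_Diff_subset_Int[of ?X B] by (simp add: Int_commute)
    then obtain a where a: "?X - B = {a}" using card_1_singletonE by blast
    have "card (B - ?X) = 1" using 2 P(4) card_Diff_subset_Int[of B ?X] fin by (simp add: Int_commute)
    then obtain b where b: "B - ?X = {b}" using card_1_singletonE by blast
    have ab: "a < 3" "3 \<le> b" "b < 6" using a b P(2) by auto
    have "B = insert b (?X - {a})" using a b by auto
    then have "transpose a b ` ?X = B" "transpose a b ` ?Y = C"
      using ab C by (auto simp: transpose_def image_iff)
    then have "P = part_act (transpose a b) (block_partition 3 2)"
      using P(1) block_partition_three_two unfolding part_act_def by auto
    then show ?thesis using ab by blast
  qed
qed

lemma uniform_partition_three_two_cases:
  assumes P: "P \<in> uniform_partitions 3 2"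
  shows "P = block_partition 3 2
    \<or> (\<exists>a b. a < 3 \<and> 3 \<le> b \<and> b < 6 \<and> P = part_act (transpose a b) (block_partition 3 2))"
proof -
  let ?X = "{0..<3::nat}"
  have P': "partition_on {0..<6} P" "card P = 2" "\<forall>B\<in>P. card B = 3"
    using P unfolding uniform_partitions_def by auto
  obtain B C where BC: "P = {B, C}" "B \<noteq> C" using P'(2) card_2_iff by metis
  have U: "B \<union> C = {0..<6}" and D: "B \<inter> C = {}"
    using P'(1) BC unfolding partition_on_def disjoint_def by auto
  have card_BC: "card B = 3" "card C = 3" using P'(3) BC by auto
  have "?X \<inter> B \<inter> (?X \<inter> C) = {}" using D by auto
  then have "card (?X \<inter> B) + card (?X \<inter> C) = 3"
    using card_Un_disjoint[of "?X \<inter> B" "?X \<inter> C"] U by (simp add: Int_Un_distrib[symmetric])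
  then consider "2 \<le> card (?X \<inter> B)" | "2 \<le> card (?X \<inter> C)" by linarith
  then show ?thesis
  proof cases
    case 1
    then show ?thesis using three_two_partition_cases_by_block[OF BC(1) U D card_BC(1)] by blast
  next
    case 2
    then show ?thesis
      using three_two_partition_cases_by_block[of P C B] BC U D card_BC
      by (auto simp: insert_commute Un_commute Int_commute)
  qed
qed

lemma part_act_transpose_1_2_three_two:
  "part_act (transpose 1 2) (block_partition 3 2) = block_partition 3 2"
  by (rule part_act_transpose_in_block) auto

lemma block_partition_three_two_moved_to:
  assumes G: "G = Alt (3*2) \<or> G = Sym (3*2)" and P: "P \<in> uniform_partitions 3 2"
  shows "\<exists>g\<in>G. part_act g (block_partition 3 2) = P"
  using uniform_partition_three_two_cases[OF P]
proof
  assume "P = block_partition 3 2"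
  then show ?thesis using alt_sym_id[OF G] part_act_id by metis
next
  assume "\<exists>a b. a < 3 \<and> 3 \<le> b \<and> b < 6 \<and> P = part_act (transpose a b) (block_partition 3 2)"
  then obtain a b where ab: "a < 3" "3 \<le> b" "b < 6" "P = part_act (transpose a b) (block_partition 3 2)"
    by blast
  text \<open>Correct the parity by a transposition fixing the block partition.\<close>
  have "transpose a b \<circ> transpose 1 2 permutes {0..<3*2}"
    using ab by (intro permutes_compose transpose_permutes) auto
  moreover have "evenperm (transpose a b \<circ> transpose 1 2)"
    using ab by (simp add: evenperm_comp permutation_swap_id evenperm_swap)
  ultimately have "transpose a b \<circ> transpose 1 2 \<in> G" using G unfolding Alt_def Sym_def by auto
  moreover have "part_act (transpose a b \<circ> transpose 1 2) (block_partition 3 2) = P"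
    using ab part_act_transpose_1_2_three_two by (simp add: part_act_comp)
  ultimately show ?thesis by blast
qed

lemma single_swap_three_two_moved_to:
  assumes G: "G = Alt (3*2) \<or> G = Sym (3*2)"
    and P: "P \<in> uniform_partitions 3 2" "P \<noteq> block_partition 3 2"
  shows "\<exists>u\<in>G. part_act u (block_partition 3 2) = block_partition 3 2
    \<and> part_act u (part_act (transpose 0 3) (block_partition 3 2)) = P"
proof -
  let ?\<alpha> = "block_partition 3 2" and ?\<beta> = "part_act (transpose 0 3) (block_partition 3 2)"
  obtain a b where ab: "a < 3" "3 \<le> b" "b < 6" "P = part_act (transpose a b) ?\<alpha>"
    using uniform_partition_three_two_cases P by blast
  let ?h = "transpose 0 a \<circ> transpose 3 b"
  have h: "?h permutes {0..<3*2}" using ab by (intro permutes_compose transpose_permutes) auto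
  have "part_act (transpose 0 a) ?\<alpha> = ?\<alpha>"
    by (rule part_act_transpose_in_block) (use ab in auto)
  moreover have "part_act (transpose 3 b) ?\<alpha> = ?\<alpha>"
    by (rule part_act_transpose_in_block) (use ab in auto)
  ultimately have h_stab: "part_act ?h ?\<alpha> = ?\<alpha>" by (simp add: part_act_comp)
  have "?h 0 = a" "?h 3 = b" using ab by (auto simp: transpose_def)
  then have image: "part_act ?h ?\<beta> = P" using part_act_stabiliser_transpose(1)[OF h h_stab] ab by simp
  have "part_act (transpose 1 2) ?\<beta> = ?\<beta>"
    using transpose_comp_commute[where a = 1 and b = 2 and c = 0 and d = "3::nat"]
      part_act_transpose_1_2_three_two
    by (intro part_act_commuting) auto
  moreover have "transpose 1 2 permutes {0..<3*2::nat}" by (rule transpose_permutes) auto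
  moreover have "\<not> evenperm (transpose (1::nat) 2)" by (simp add: evenperm_swap)
  ultimately have "P \<in> stab_orbit G part_act ?\<alpha> ?\<beta>"
    using part_act_in_stab_orbit[OF G h h_stab _ _ part_act_transpose_1_2_three_two] image by blast
  then show ?thesis unfolding stab_orbit_def by blast
qed

lemma two_transitive_three_two:
  assumes G: "G = Alt (3*2) \<or> G = Sym (3*2)"
  shows "two_transitive G (uniform_partitions 3 2) part_act"
proof (rule two_transitive_if_stabiliser_transitive[OF G])
  show "part_act g P \<in> uniform_partitions 3 2" if "g \<in> G" "P \<in> uniform_partitions 3 2" for g P
    using part_act_uniform_partitions[OF alt_sym_permutes[OF G that(1)] that(2)] .
  show "block_partition 3 2 \<in> uniform_partitions 3 2"
    by (rule block_partition_in_uniform_partitions) simp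
qed (use block_partition_three_two_moved_to[OF G] single_swap_three_two_moved_to[OF G] in auto)

lemma card_uniform_partitions_three_two: "3 \<le> card (uniform_partitions 3 2)"
proof -
  let ?\<alpha> = "block_partition 3 2"
  let ?\<beta> = "part_act (transpose 0 3) ?\<alpha>" and ?\<gamma> = "part_act (transpose 0 4) ?\<alpha>"
  have p: "transpose 0 3 permutes {0..<3*2::nat}" "transpose 0 4 permutes {0..<3*2::nat}"
    by (auto intro: transpose_permutes)
  have \<alpha>: "?\<alpha> \<in> uniform_partitions 3 2" by (rule block_partition_in_uniform_partitions) simp
  have "?\<beta> \<noteq> ?\<alpha>" "?\<gamma> \<noteq> ?\<alpha>"
    using part_act_block_partition_neq[OF _ p(1), of 0 1] part_act_block_partition_neq[OF _ p(2), of 0 1]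
    by simp_all
  moreover have "?\<beta> \<noteq> ?\<gamma>"
  proof
    assume "?\<beta> = ?\<gamma>"
    then have "\<forall>x<6. \<forall>y<6. transpose 0 3 x div 3 = transpose 0 3 y div 3
        \<longleftrightarrow> transpose 0 4 x div 3 = transpose 0 4 (y::nat) div 3"
      using part_act_block_partition_eq_iff[OF _ p] by simp
    from this[rule_format, of 0 4] show False by (simp add: transpose_def)
  qed
  moreover have "{?\<alpha>, ?\<beta>, ?\<gamma>} \<subseteq> uniform_partitions 3 2"
    using \<alpha> part_act_uniform_partitions[OF p(1) \<alpha>] part_act_uniform_partitions[OF p(2) \<alpha>] by auto
  moreover have "card {?\<alpha>, ?\<beta>, ?\<gamma>} = 3" using calculation by simp
  ultimately show ?thesis using card_mono[OF finite_uniform_partitions] by metis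
qed

subsection \<open>Suborbits of different sizes\<close>

lemma not_three_halves_transitive_if_card_stab_orbit_neq:
  assumes "\<alpha> \<in> \<Omega>" "\<beta> \<in> \<Omega> - {\<alpha>}" "\<gamma> \<in> \<Omega> - {\<alpha>}"
    and "card (stab_orbit G act \<alpha> \<beta>) \<noteq> card (stab_orbit G act \<alpha> \<gamma>)"
  shows "\<not> three_halves_transitive G \<Omega> act"
  using assms unfolding three_halves_transitive_def by metis

lemma part_act_block_partition_in_Diff:
  assumes k: "0 < k" and t: "t permutes {0..<k*l}"
    and xy: "x < k*l" "y < k*l" "x div k = y div k" "inv t x div k \<noteq> inv t y div k"
  shows "part_act t (block_partition k l) \<in> uniform_partitions k l - {block_partition k l}"
  using part_act_uniform_partitions[OF t block_partition_in_uniform_partitions[OF k]]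
    part_act_block_partition_neq[OF k t xy] by blast

lemma card_single_swap_suborbit_le:
  assumes G: "G = Alt (k*l) \<or> G = Sym (k*l)" and k: "0 < k" and l: "2 \<le> l"
  shows "card (stab_orbit G part_act (block_partition k l) (part_act (transpose 0 k) (block_partition k l)))
    \<le> card (incr_pairs l) * (k * k)"
proof -
  let ?f = "\<lambda>((i, j), u, v). part_act (transpose (i*k + u) (j*k + v)) (block_partition k l)"
  have "card (stab_orbit G part_act (block_partition k l) (part_act (transpose 0 k) (block_partition k l)))
      \<le> card (?f ` (incr_pairs l \<times> {0..<k} \<times> {0..<k}))"
    using single_swap_suborbit_subset[OF G k l] finite_incr_pairs by (intro card_mono) auto
  also have "\<dots> \<le> card (incr_pairs l \<times> {0..<k} \<times> {0..<k})"
    using finite_incr_pairs by (intro card_image_le) auto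
  finally show ?thesis by (simp add: card_cartesian_product)
qed

lemma card_single_swap_suborbit_le_two:
  assumes G: "G = Alt (2*l) \<or> G = Sym (2*l)" and l: "2 \<le> l"
  shows "card (stab_orbit G part_act (block_partition 2 l) (part_act (transpose 0 2) (block_partition 2 l)))
    \<le> card (incr_pairs l) * 2"
proof -
  let ?f = "\<lambda>((i, j), v). part_act (transpose (i*2) (j*2 + v)) (block_partition 2 l)"
  have "card (stab_orbit G part_act (block_partition 2 l) (part_act (transpose 0 2) (block_partition 2 l)))
      \<le> card (?f ` (incr_pairs l \<times> {0..<2}))"
    using single_swap_suborbit_subset_two[OF G l] finite_incr_pairs by (intro card_mono) auto
  also have "\<dots> \<le> card (incr_pairs l \<times> {0..<2::nat})"
    using finite_incr_pairs by (intro card_image_le) auto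
  finally show ?thesis by (simp add: card_cartesian_product)
qed

lemma card_double_swap_suborbit_ge:
  assumes G: "G = Alt (k*l) \<or> G = Sym (k*l)" and k: "4 \<le> k" and l: "2 \<le> l"
  shows "card (incr_pairs l) * ((k - 1) * card (incr_pairs k))
    \<le> card (stab_orbit G part_act (block_partition k l) (double_swap k l ((0, 1), 1, (0, 1))))"
proof -
  have "double_swap k l ((0, 1), 1, (0, 1)) \<in> uniform_partitions k l"
    unfolding double_swap_def using k l block_pos_less[of 1 l 1 k]
    by (auto intro!: part_act_uniform_partitions block_partition_in_uniform_partitions
        permutes_compose transpose_permutes)
  then have "card (double_swap k l ` double_swap_params k l)
      \<le> card (stab_orbit G part_act (block_partition k l) (double_swap k l ((0, 1), 1, (0, 1))))"
    using double_swap_in_suborbit[OF G k l] finite_stab_orbit[OF G] by (intro card_mono) auto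
  then show ?thesis
    using card_image[OF inj_on_double_swap] k
    by (simp add: double_swap_params_def card_cartesian_product)
qed

lemma card_three_cycle_suborbit_ge:
  assumes G: "G = Alt (k*l) \<or> G = Sym (k*l)" and k: "2 \<le> k" and l: "3 \<le> l"
    and U: "k = 2 \<and> U = {0} \<or> 3 \<le> k \<and> U = {0..<k}"
  shows "card (incr_triples l) * card U * k * k * 2
    \<le> card (stab_orbit G part_act (block_partition k l) (three_cycle k l (0, k, 2*k)))"
proof -
  have "three_cycle k l (0, k, 2*k) \<in> uniform_partitions k l"
    unfolding three_cycle_def using k l block_pos_less[of 2 l 0 k] block_pos_less[of 1 l 0 k]
    by (auto intro!: part_act_uniform_partitions block_partition_in_uniform_partitions
        permutes_compose transpose_permutes)
  then have "card (three_cycle k l ` three_cycle_params k l U)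
      \<le> card (stab_orbit G part_act (block_partition k l) (three_cycle k l (0, k, 2*k)))"
    using three_cycle_in_suborbit[OF G k l] finite_stab_orbit[OF G] by (intro card_mono) auto
  moreover have "card (three_cycle k l ` three_cycle_params k l U) = card (three_cycle_params k l U)"
    using U by (intro card_image inj_on_three_cycle) auto
  ultimately show ?thesis using card_three_cycle_params[of U k l] U k by auto
qed

lemma single_swap_suborbit_smaller_double_swap:
  assumes G: "G = Alt (k*l) \<or> G = Sym (k*l)" and k: "4 \<le> k" and l: "2 \<le> l"
  shows "card (stab_orbit G part_act (block_partition k l) (part_act (transpose 0 k) (block_partition k l)))
    < card (stab_orbit G part_act (block_partition k l) (double_swap k l ((0, 1), 1, (0, 1))))"
proof -
  have "2 * (k * k) < 2 * ((k - 1) * card (incr_pairs k))"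
  proof -
    obtain j where "k = j + 4" using k by (metis add.commute le_Suc_ex)
    then show ?thesis using card_incr_pairs[of k] by (simp add: algebra_simps)
  qed
  moreover have "0 < card (incr_pairs l)" using card_incr_pairs[of l] l by (cases l) auto
  ultimately have "card (incr_pairs l) * (k * k) < card (incr_pairs l) * ((k - 1) * card (incr_pairs k))"
    by simp
  then show ?thesis
    using card_single_swap_suborbit_le[OF G _ l] card_double_swap_suborbit_ge[OF G k l] k by linarith
qed

lemma single_swap_suborbit_smaller_three_cycle:
  assumes G: "G = Alt (k*l) \<or> G = Sym (k*l)" and k: "k = 2 \<or> k = 3" and l: "3 \<le> l"
  shows "card (stab_orbit G part_act (block_partition k l) (part_act (transpose 0 k) (block_partition k l)))
    < card (stab_orbit G part_act (block_partition k l) (three_cycle k l (0, k, 2*k)))"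
proof -
  obtain j where j: "l = j + 3" using l by (metis add.commute le_Suc_ex)
  have pairs: "2 * card (incr_pairs l) = l * (l - 1)" and triples: "6 * card (incr_triples l) = l * (l - 1) * (l - 2)"
    by (rule card_incr_pairs card_incr_triples)+
  show ?thesis
    using k
  proof
    assume k: "k = 2"
    have "6 * (card (incr_pairs l) * 2) < 6 * (card (incr_triples l) * card {0::nat} * k * k * 2)"
      using pairs triples k unfolding j by (simp add: algebra_simps)
    then show ?thesis
      using card_single_swap_suborbit_le_two[of G l] card_three_cycle_suborbit_ge[OF G _ l, of "{0}"] G l k
      by simp
  next
    assume k: "k = 3"
    have "6 * (card (incr_pairs l) * (k * k)) < 6 * (card (incr_triples l) * card {0..<k} * k * k * 2)"
      using pairs triples k unfolding j by (simp add: algebra_simps)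
    then show ?thesis
      using card_single_swap_suborbit_le[OF G] card_three_cycle_suborbit_ge[OF G _ l, of "{0..<k}"] k l
      by simp
  qed
qed

lemma not_three_halves_transitive:
  assumes G: "G = Alt (k*l) \<or> G = Sym (k*l)" and k: "2 \<le> k" and l: "2 \<le> l" and "5 \<le> k*l"
    and "(k, l) \<noteq> (3, 2)"
  shows "\<not> three_halves_transitive G (uniform_partitions k l) part_act"
proof -
  have k0: "0 < k" using k by simp
  have "k < k*l" using k l by simp
  then have pts: "0 < k*l" "1 < k*l" "2 < k*l" "k < k*l" "k + 1 < k*l"
    using k l block_pos_less[of 1 l 1 k] by (auto simp: mult.commute)
  have \<beta>: "part_act (transpose 0 k) (block_partition k l) \<in> uniform_partitions k l - {block_partition k l}"
    using pts k by (intro part_act_block_partition_in_Diff[OF k0, where x = 0 and y = 1])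
      (auto simp: transpose_permutes transpose_def)
  note suborbits_neq = not_three_halves_transitive_if_card_stab_orbit_neq[OF
      block_partition_in_uniform_partitions[OF k0] \<beta>]
  have "4 \<le> k \<or> 3 \<le> l" using l assms(4,5) by (cases "l = 2") auto
  then consider "4 \<le> k" | "k = 2 \<or> k = 3" "3 \<le> l" using k by linarith
  then show ?thesis
  proof cases
    case 1
    have "double_swap k l ((0, 1), 1, (0, 1))
        = part_act (transpose 0 k \<circ> transpose 1 (k + 1)) (block_partition k l)"
      by (simp add: double_swap_def)
    also have "\<dots> \<in> uniform_partitions k l - {block_partition k l}"
      using pts 1 by (intro part_act_block_partition_in_Diff[OF k0, where x = 0 and y = 2])
        (auto simp: inv_transpose_comp transpose_def intro!: permutes_compose transpose_permutes)
    finally have "double_swap k l ((0, 1), 1, (0, 1)) \<in> uniform_partitions k l - {block_partition k l}" .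
    then show ?thesis
      using suborbits_neq single_swap_suborbit_smaller_double_swap[OF G 1 l] by (metis less_irrefl)
  next
    case 2
    have "three_cycle k l (0, k, 2*k) = part_act (transpose 0 k \<circ> transpose k (2*k)) (block_partition k l)"
      by (simp add: three_cycle_def)
    also have "\<dots> \<in> uniform_partitions k l - {block_partition k l}"
      using pts 2 block_pos_less[of 2 l 0 k]
      by (intro part_act_block_partition_in_Diff[OF k0, where x = 0 and y = 1])
        (auto simp: inv_transpose_comp transpose_def intro!: permutes_compose transpose_permutes)
    finally have "three_cycle k l (0, k, 2*k) \<in> uniform_partitions k l - {block_partition k l}" .
    then show ?thesis
      using suborbits_neq single_swap_suborbit_smaller_three_cycle[OF G 2] by (metis less_irrefl)
  qed
qed

theorem lemma4p4:
  fixes k l :: nat and G :: "(nat \<Rightarrow> nat) set"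
  assumes "k \<ge> 2" and "l \<ge> 2" and "k * l \<ge> 5"
    and "G = Alt (k * l) \<or> G = Sym (k * l)"
  shows "(three_halves_transitive G (uniform_partitions k l) part_act \<longleftrightarrow> (k, l) = (3, 2))
         \<and> ((k, l) = (3, 2) \<longrightarrow> two_transitive G (uniform_partitions k l) part_act)"
proof (cases "(k, l) = (3, 2)")
  case True
  then have G: "G = Alt (3*2) \<or> G = Sym (3*2)" and kl: "k = 3" "l = 2" using assms(4) by auto
  have "two_transitive G (uniform_partitions 3 2) part_act" using two_transitive_three_two[OF G] .
  moreover from this have "three_halves_transitive G (uniform_partitions 3 2) part_act"
    using G part_act_uniform_partitions[of _ 3 2] alt_sym_permutes[OF G]
    by (intro three_halves_transitive_if_two_transitive[OF G _ finite_uniform_partitions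
          card_uniform_partitions_three_two]) auto
  ultimately show ?thesis using kl by simp
next
  case False
  then show ?thesis using not_three_halves_transitive[OF assms(4,1-3)] by blast
qed

end
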